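(* For any two interval partitions $\mathcal C,\mathcal C'$ of the column index set $\{0,\dots,L-1\}$, there is a circuit of $\mathcal O(N)$ nearest-neighbour two-qubit Clifford gates (CNOT, CZ) and single-qubit Clifford gates, of depth $\mathcal O(L)=\mathcal O(\sqrt N)$ on the $L\times L$ nearest-neighbour qubit lattice ($N=L^2$), that maps the JW encoding with ordering $m_{\mathcal C}$ to the JW encoding with ordering $m_{\mathcal C'}$.
   Context: Qubits sit on the grid $\{0,\dots,L-1\}^2$ (sites $(r,c)$, row $r$, column $c$) with nearest-neighbour connectivity; mode $j$ is identified with qubit $j$. A canonical ordering is a bijection $m$ from sites to $\{0,\dots,N-1\}$; the JW encoding with ordering $m$ has Majoranas $\chi^{(m)}_{2j}=X_j\prod_{k:m(k)<m(j)}Z_k$, $\chi^{(m)}_{2j+1}=Y_j\prod_{k:m(k)<m(j)}Z_k$, and a unitary $W$ maps the encoding with ordering $m$ to that with $m'$ if $W\chi^{(m)}_aW^\dagger=\chi^{(m')}_a$ for all $a$. An interval partition $\mathcal C=\{C_1,\dots,C_K\}$ of $\{0,\dots,L-1\}$ consists of pairwise disjoint sets of consecutive integers $C_i=\{a_i,\dots,a_i+w_i-1\}$ (width $w_i\ge1$), listed left to right, whose union is $\{0,\dots,L-1\}$. The boustrophedon ordering $m_{\mathcal C}$ is: for $c\in C_j$, $m_{\mathcal C}(r,c)=L\sum_{i<j}w_i+w_jr+(c-a_j)$ if $r$ is even and $L\sum_{i<j}w_i+w_jr+(w_j-1-(c-a_j))$ if $r$ is odd (a snake pattern through each vertical strip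 $C_j\times\{0,\dots,L-1\}$, strips concatenated left to right). *)

theory Defs
  imports Complex_Main
begin

type_synonym site = "nat \<times> nat"   (* (row r, column c) *)

definition sites :: "nat \<Rightarrow> site set" where
  "sites L = {0..<L} \<times> {0..<L}"

definition adjacent :: "site \<Rightarrow> site \<Rightarrow> bool" where
  "adjacent p q \<longleftrightarrow>
     (fst p = fst q \<and> (snd q = snd p + 1 \<or> snd p = snd q + 1)) \<or>
     (snd p = snd q \<and> (fst q = fst p + 1 \<or> fst p = fst q + 1))"

text \<open>Computational basis states of the N = L^2 qubits are subsets of the sites
  (the set of qubits in state |1>). An operator is a matrix indexed by basis
  states; only entries indexed by subsets of sites L are meaningful.\<close>

type_synonym op = "site set \<Rightarrow> site set \<Rightarrow> complex"

definition opmult :: "nat \<Rightarrow> op \<Rightarrow> op \<Rightarrow> op" where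
  "opmult L A B = (\<lambda>x y. \<Sum>z\<in>Pow (sites L). A x z * B z y)"

definition adj :: "op \<Rightarrow> op" where
  "adj A = (\<lambda>x y. cnj (A y x))"

definition op_id :: op where
  "op_id = (\<lambda>x y. if x = y then 1 else 0)"

definition op_eq :: "nat \<Rightarrow> op \<Rightarrow> op \<Rightarrow> bool" where
  "op_eq L A B \<longleftrightarrow> (\<forall>x\<in>Pow (sites L). \<forall>y\<in>Pow (sites L). A x y = B x y)"

definition flip :: "site \<Rightarrow> site set \<Rightarrow> site set" where
  "flip j S = (if j \<in> S then S - {j} else insert j S)"

definition pauliX :: "site \<Rightarrow> op" where
  "pauliX j = (\<lambda>x y. if x = flip j y then 1 else 0)"

definition pauliY :: "site \<Rightarrow> op" where
  "pauliY j = (\<lambda>x y. if x = flip j y then (if j \<in> y then - \<i> else \<i>) else 0)"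

definition Zprod :: "site set \<Rightarrow> op" where
  "Zprod K = (\<lambda>x y. if x = y then (\<Prod>k\<in>K. if k \<in> y then -1 else 1) else 0)"

text \<open>Majoranas: chi_{2j} (b = False) = X_j prod_{m k < m j} Z_k,
  chi_{2j+1} (b = True) = Y_j prod_{m k < m j} Z_k.\<close>
definition majorana :: "nat \<Rightarrow> (site \<Rightarrow> nat) \<Rightarrow> site \<Rightarrow> bool \<Rightarrow> op" where
  "majorana L m j b =
     opmult L (if b then pauliY j else pauliX j) (Zprod {k \<in> sites L. m k < m j})"

definition maps_encoding :: "nat \<Rightarrow> op \<Rightarrow> (site \<Rightarrow> nat) \<Rightarrow> (site \<Rightarrow> nat) \<Rightarrow> bool" where
  "maps_encoding L W m m' \<longleftrightarrow>
     (\<forall>j\<in>sites L. \<forall>b. op_eq L (opmult L (opmult L W (majorana L m j b)) (adj W))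
                                (majorana L m' j b))"

text \<open>An interval partition C_1,...,C_K of {0..L-1}, listed left to right, is
  given by its list of widths [w_1,...,w_K]; C_i = {a_i,...,a_i+w_i-1} with
  a_i = w_1+...+w_{i-1}.\<close>
definition interval_partition :: "nat \<Rightarrow> nat list \<Rightarrow> bool" where
  "interval_partition L ws \<longleftrightarrow> (\<forall>w\<in>set ws. w \<ge> 1) \<and> sum_list ws = L"

definition strip_index :: "nat list \<Rightarrow> nat \<Rightarrow> nat" where
  "strip_index ws c = (THE j. j < length ws \<and> sum_list (take j ws) \<le> c \<and> c < sum_list (take (Suc j) ws))"

definition boustro :: "nat \<Rightarrow> nat list \<Rightarrow> site \<Rightarrow> nat" where
  "boustro L ws p =
     (let r = fst p; c = snd p; j = strip_index ws c;
          a = sum_list (take j ws); w = ws ! j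
      in L * a + w * r + (if even r then c - a else w - 1 - (c - a)))"

type_synonym mat2 = "bool \<Rightarrow> bool \<Rightarrow> complex"  (* False = |0>, True = |1> *)

definition m2mult :: "mat2 \<Rightarrow> mat2 \<Rightarrow> mat2" where
  "m2mult U V = (\<lambda>a b. \<Sum>c\<in>UNIV. U a c * V c b)"

definition adj2 :: "mat2 \<Rightarrow> mat2" where
  "adj2 U = (\<lambda>a b. cnj (U b a))"

definition id2 :: mat2 where "id2 = (\<lambda>a b. if a = b then 1 else 0)"
definition X2 :: mat2 where "X2 = (\<lambda>a b. if a \<noteq> b then 1 else 0)"
definition Y2 :: mat2 where "Y2 = (\<lambda>a b. if a \<noteq> b then (if b then - \<i> else \<i>) else 0)"
definition Z2 :: mat2 where "Z2 = (\<lambda>a b. if a = b then (if a then -1 else 1) else 0)"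

definition single_clifford :: "mat2 \<Rightarrow> bool" where
  "single_clifford U \<longleftrightarrow>
     m2mult U (adj2 U) = id2 \<and>
     (\<forall>P\<in>{X2, Z2}. \<exists>s\<in>{1, -1}. \<exists>Q\<in>{X2, Y2, Z2}.
        m2mult (m2mult U P) (adj2 U) = (\<lambda>a b. s * Q a b))"

datatype gate = CNOT site site   (* control, target *)
  | CZ site site
  | Single site mat2

fun gate_op :: "gate \<Rightarrow> op" where
  "gate_op (CNOT c t) = (\<lambda>x y. if x = (if c \<in> y then flip t y else y) then 1 else 0)"
| "gate_op (CZ a b) = (\<lambda>x y. if x = y then (if a \<in> y \<and> b \<in> y then -1 else 1) else 0)"
| "gate_op (Single j U) = (\<lambda>x y. if x - {j} = y - {j} then U (j \<in> x) (j \<in> y) else 0)"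

fun gate_support :: "gate \<Rightarrow> site set" where
  "gate_support (CNOT a b) = {a, b}"
| "gate_support (CZ a b) = {a, b}"
| "gate_support (Single j U) = {j}"

fun valid_gate :: "nat \<Rightarrow> gate \<Rightarrow> bool" where
  "valid_gate L (CNOT a b) \<longleftrightarrow> a \<in> sites L \<and> b \<in> sites L \<and> adjacent a b"
| "valid_gate L (CZ a b) \<longleftrightarrow> a \<in> sites L \<and> b \<in> sites L \<and> adjacent a b"
| "valid_gate L (Single j U) \<longleftrightarrow> j \<in> sites L \<and> single_clifford U"

type_synonym layer = "gate list"

definition valid_layer :: "nat \<Rightarrow> layer \<Rightarrow> bool" where
  "valid_layer L l \<longleftrightarrow> (\<forall>g\<in>set l. valid_gate L g) \<and>
     (\<forall>i<length l. \<forall>k<length l. i \<noteq> k \<longrightarrow> gate_support (l ! i) \<inter> gate_support (l ! k) = {})"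

definition layer_op :: "nat \<Rightarrow> layer \<Rightarrow> op" where
  "layer_op L l = foldr (\<lambda>g A. opmult L (gate_op g) A) l op_id"

text \<open>A circuit is a list of layers, applied first to last; its depth is the
  number of layers.\<close>
fun circuit_op :: "nat \<Rightarrow> layer list \<Rightarrow> op" where
  "circuit_op L [] = op_id"
| "circuit_op L (l # ls) = opmult L (circuit_op L ls) (layer_op L l)"

definition valid_circuit :: "nat \<Rightarrow> layer list \<Rightarrow> bool" where
  "valid_circuit L cs \<longleftrightarrow> (\<forall>l\<in>set cs. valid_layer L l)"

definition gate_count :: "layer list \<Rightarrow> nat" where
  "gate_count cs = sum_list (map length cs)"

definition depth :: "layer list \<Rightarrow> nat" where
  "depth cs = length cs"

end

(*
  Both encodings are compared with the Jordan--Wigner encoding of the column-major ordering.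
  Conjugation by the diagonal sign operator (-1)^(number of pairs of occupied modes ordered
  differently by two orderings) turns the Jordan--Wigner string of one ordering into that of the
  other, so it suffices to produce these signs. For a boustrophedon ordering the pairs ordered
  differently from column-major lie in one strip: p is left of q in the same odd row, or left of
  q and strictly below it. CNOT ladders along the rows and then along the columns of a strip
  leave on each qubit the parity of the occupation of its row segment and then of the block
  below it; nearest-neighbour CZ gates between such parity qubits produce the signs, and the
  CNOTs are then undone. Each ladder has depth O(L) and O(L^2) gates. The circuit for the first
  partition followed by the circuit for the second one maps one encoding to the other.
*)
theory Submission
  imports Defs
begin

lemma finite_sites [simp]: "finite (sites L)"
  by (simp add: sites_def)

lemma mem_sites_iff: "t \<in> sites L \<longleftrightarrow> fst t < L \<and> snd t < L"
  by (cases t) (auto simp: sites_def)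

lemma finite_subset_sites: "y \<subseteq> sites L \<Longrightarrow> finite y"
  using finite_sites finite_subset by blast

lemma flip_subset_sites: "j \<in> sites L \<Longrightarrow> y \<subseteq> sites L \<Longrightarrow> flip j y \<subseteq> sites L"
  by (auto simp: flip_def)

lemma card_sites: "card (sites L) = L * L"
  by (simp add: sites_def)

lemma card_sym_diff:
  assumes "finite A" "finite B"
  shows "card (sym_diff A B) + 2 * card (A \<inter> B) = card A + card B"
proof -
  have "sym_diff A B = (A \<union> B) - (A \<inter> B)" by auto
  then have "card (sym_diff A B) = card (A \<union> B) - card (A \<inter> B)"
    using assms by (simp add: card_Diff_subset[of "A \<inter> B" "A \<union> B"] le_supI1)
  moreover have "card (A \<union> B) + card (A \<inter> B) = card A + card B"
    using assms by (rule card_Un_Int[symmetric])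
  moreover have "card (A \<inter> B) \<le> card (A \<union> B)"
    using assms by (intro card_mono) auto
  ultimately show ?thesis by simp
qed

lemma even_card_sym_diff:
  assumes "finite A" "finite B"
  shows "even (card A + card B + card (sym_diff A B))"
proof -
  have "card A + card B + card (sym_diff A B) = 2 * (card (sym_diff A B) + card (A \<inter> B))"
    using card_sym_diff[OF assms] by simp
  then show ?thesis by simp
qed

lemma odd_card_sym_diff_Int:
  assumes "finite y"
  shows "odd (card (sym_diff A B \<inter> y)) \<longleftrightarrow> odd (card (A \<inter> y)) \<noteq> odd (card (B \<inter> y))"
proof -
  have "sym_diff A B \<inter> y = sym_diff (A \<inter> y) (B \<inter> y)" by auto
  moreover have "even (card (A \<inter> y) + card (B \<inter> y) + card (sym_diff (A \<inter> y) (B \<inter> y)))"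
    using assms by (intro even_card_sym_diff) auto
  ultimately show ?thesis by presburger
qed

lemma card_Collect_mem_cong: "(\<And>x. x \<in> A \<Longrightarrow> P x \<longleftrightarrow> Q x) \<Longrightarrow> card {x \<in> A. P x} = card {x \<in> A. Q x}"
  by (rule arg_cong[where f = card]) auto

lemma sum_card_fibres:
  assumes "finite S" "finite K"
  shows "(\<Sum>k\<in>K. card {t \<in> S. f t = k \<and> P t}) = card {t \<in> S. f t \<in> K \<and> P t}"
proof -
  have "{t \<in> S. f t \<in> K \<and> P t} = (\<Union>k\<in>K. {t \<in> S. f t = k \<and> P t})" by auto
  also have "card \<dots> = (\<Sum>k\<in>K. card {t \<in> S. f t = k \<and> P t})"
    using assms by (intro card_UN_disjoint) auto
  finally show ?thesis by simp
qed

lemma sum_card_disjoint_le: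
  assumes "finite S" "finite K" "inj_on g K"
  shows "(\<Sum>k\<in>K. card {t \<in> S. f t = g k}) \<le> card S"
proof -
  have "(\<Sum>k\<in>K. card {t \<in> S. f t = g k}) = card (\<Union>k\<in>K. {t \<in> S. f t = g k})"
    using assms by (subst card_UN_disjoint) (auto simp: inj_on_def)
  also have "\<dots> \<le> card S" using assms by (intro card_mono) auto
  finally show ?thesis .
qed

lemma even_sum_add_card_odd:
  "finite S \<Longrightarrow> even ((\<Sum>q\<in>S. f q) + card {q \<in> S. odd (f q :: nat)})"
proof (induction S rule: finite_induct)
  case (insert a S)
  have "{q \<in> insert a S. odd (f q)} =
      (if odd (f a) then insert a {q \<in> S. odd (f q)} else {q \<in> S. odd (f q)})"
    by auto
  then show ?case using insert by auto
qed simp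

subsection \<open>Monomial operators\<close>

text \<open>CNOT and CZ circuits permute the computational basis up to signs.\<close>

definition monomial_op :: "nat \<Rightarrow> op \<Rightarrow> (site set \<Rightarrow> site set) \<Rightarrow> (site set \<Rightarrow> complex) \<Rightarrow> bool" where
  "monomial_op L A \<sigma> \<phi> \<longleftrightarrow>
     (\<forall>y\<in>Pow (sites L). \<sigma> y \<in> Pow (sites L) \<and>
        (\<forall>x\<in>Pow (sites L). A x y = (if x = \<sigma> y then \<phi> y else 0)))"

lemma monomial_op_cong:
  "monomial_op L A \<sigma> \<phi> \<Longrightarrow> (\<forall>y\<in>Pow (sites L). \<sigma> y = \<sigma>' y \<and> \<phi> y = \<phi>' y) \<Longrightarrow> monomial_op L A \<sigma>' \<phi>'"
  unfolding monomial_op_def by auto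

lemma monomial_op_opmult:
  assumes A: "monomial_op L A \<sigma> \<phi>" and B: "monomial_op L B \<tau> \<psi>"
  shows "monomial_op L (opmult L A B) (\<sigma> \<circ> \<tau>) (\<lambda>y. \<phi> (\<tau> y) * \<psi> y)"
  unfolding monomial_op_def
proof (intro ballI conjI)
  fix y assume y: "y \<in> Pow (sites L)"
  then have \<tau>y: "\<tau> y \<in> Pow (sites L)" using B unfolding monomial_op_def by blast
  then show "(\<sigma> \<circ> \<tau>) y \<in> Pow (sites L)" using A unfolding monomial_op_def by auto
  fix x assume x: "x \<in> Pow (sites L)"
  have "opmult L A B x y =
      (\<Sum>z\<in>Pow (sites L). if \<tau> y = z then (if x = \<sigma> z then \<phi> z else 0) * \<psi> y else 0)"
    unfolding opmult_def using A B x y unfolding monomial_op_def by (intro sum.cong) auto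
  also have "\<dots> = (if x = (\<sigma> \<circ> \<tau>) y then \<phi> (\<tau> y) * \<psi> y else 0)"
    using \<tau>y by simp
  finally show "opmult L A B x y = (if x = (\<sigma> \<circ> \<tau>) y then \<phi> (\<tau> y) * \<psi> y else 0)" .
qed

lemma monomial_op_adj: "monomial_op L A id \<phi> \<Longrightarrow> monomial_op L (adj A) id (\<lambda>y. cnj (\<phi> y))"
  unfolding monomial_op_def adj_def by auto

fun single_qubit_gate :: "gate \<Rightarrow> bool" where
  "single_qubit_gate (Single j U) = True"
| "single_qubit_gate _ = False"

fun gate_perm :: "gate \<Rightarrow> site set \<Rightarrow> site set" where
  "gate_perm (CNOT c t) y = (if c \<in> y then flip t y else y)"
| "gate_perm _ y = y"

fun gate_sign_exp :: "gate \<Rightarrow> site set \<Rightarrow> nat" where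
  "gate_sign_exp (CZ a b) y = (if a \<in> y \<and> b \<in> y then 1 else 0)"
| "gate_sign_exp _ y = 0"

fun layer_perm :: "layer \<Rightarrow> site set \<Rightarrow> site set" where
  "layer_perm [] = id"
| "layer_perm (g # l) = gate_perm g \<circ> layer_perm l"

fun layer_sign_exp :: "layer \<Rightarrow> site set \<Rightarrow> nat" where
  "layer_sign_exp [] y = 0"
| "layer_sign_exp (g # l) y = layer_sign_exp l y + gate_sign_exp g (layer_perm l y)"

fun circuit_perm :: "layer list \<Rightarrow> site set \<Rightarrow> site set" where
  "circuit_perm [] = id"
| "circuit_perm (l # ls) = circuit_perm ls \<circ> layer_perm l"

fun circuit_sign_exp :: "layer list \<Rightarrow> site set \<Rightarrow> nat" where
  "circuit_sign_exp [] y = 0"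
| "circuit_sign_exp (l # ls) y = layer_sign_exp l y + circuit_sign_exp ls (layer_perm l y)"

lemma circuit_perm_append: "circuit_perm (cs @ ds) = circuit_perm ds \<circ> circuit_perm cs"
  by (induction cs) auto

lemma circuit_sign_exp_append:
  "circuit_sign_exp (cs @ ds) y = circuit_sign_exp cs y + circuit_sign_exp ds (circuit_perm cs y)"
  by (induction cs arbitrary: y) auto

lemma monomial_op_gate:
  "valid_gate L g \<Longrightarrow> \<not> single_qubit_gate g \<Longrightarrow>
    monomial_op L (gate_op g) (gate_perm g) (\<lambda>y. (-1) ^ gate_sign_exp g y)"
  by (cases g) (auto simp: monomial_op_def flip_def)

lemma monomial_op_layer:
  "\<forall>g\<in>set l. valid_gate L g \<and> \<not> single_qubit_gate g \<Longrightarrow>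
    monomial_op L (layer_op L l) (layer_perm l) (\<lambda>y. (-1) ^ layer_sign_exp l y)"
proof (induction l)
  case Nil
  show ?case by (auto simp: monomial_op_def op_id_def layer_op_def)
next
  case (Cons g l)
  have "monomial_op L (opmult L (gate_op g) (layer_op L l)) (gate_perm g \<circ> layer_perm l)
      (\<lambda>y. (-1) ^ gate_sign_exp g (layer_perm l y) * (-1) ^ layer_sign_exp l y)"
    using Cons by (intro monomial_op_opmult monomial_op_gate) auto
  then show ?case
    by (auto simp: layer_op_def power_add mult.commute intro: monomial_op_cong)
qed

lemma monomial_op_circuit:
  "\<forall>l\<in>set cs. \<forall>g\<in>set l. valid_gate L g \<and> \<not> single_qubit_gate g \<Longrightarrow>
    monomial_op L (circuit_op L cs) (circuit_perm cs) (\<lambda>y. (-1) ^ circuit_sign_exp cs y)"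
proof (induction cs)
  case Nil
  show ?case by (auto simp: monomial_op_def op_id_def)
next
  case (Cons l ls)
  have "monomial_op L (opmult L (circuit_op L ls) (layer_op L l)) (circuit_perm ls \<circ> layer_perm l)
      (\<lambda>y. (-1) ^ circuit_sign_exp ls (layer_perm l y) * (-1) ^ layer_sign_exp l y)"
    using Cons by (intro monomial_op_opmult monomial_op_layer) auto
  then show ?case
    by (auto simp: power_add mult.commute intro: monomial_op_cong)
qed

subsection \<open>Parity states\<close>

text \<open>A CNOT/CZ circuit acts on basis states by a GF(2)-linear map, so it is tracked on all inputs
  \<open>y\<close> at once: qubit \<open>q\<close> of \<open>parity_state L F y\<close> holds the parity of \<open>y\<close> on \<open>F q\<close>, and
  \<open>parity_transition L cs F G n\<close> says that \<open>cs\<close> maps the parity state of \<open>F\<close> to that of \<open>G\<close>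
  with the sign \<open>(-1) ^ n y\<close>.\<close>

definition parity_state :: "nat \<Rightarrow> (site \<Rightarrow> site set) \<Rightarrow> site set \<Rightarrow> site set" where
  "parity_state L F y = {q \<in> sites L. odd (card (F q \<inter> y))}"

definition parity_transition ::
  "nat \<Rightarrow> layer list \<Rightarrow> (site \<Rightarrow> site set) \<Rightarrow> (site \<Rightarrow> site set) \<Rightarrow> (site set \<Rightarrow> nat) \<Rightarrow> bool" where
  "parity_transition L cs F G n \<longleftrightarrow>
     (\<forall>y. y \<subseteq> sites L \<longrightarrow> circuit_perm cs (parity_state L F y) = parity_state L G y \<and>
                            circuit_sign_exp cs (parity_state L F y) = n y)"

lemma parity_state_singletons:
  assumes "y \<subseteq> sites L"
  shows "parity_state L (\<lambda>q. {q}) y = y"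
proof -
  have "odd (card ({q} \<inter> y)) \<longleftrightarrow> q \<in> y" for q :: site
    by (cases "q \<in> y") auto
  then show ?thesis using assms unfolding parity_state_def by auto
qed

lemma parity_state_cong: "\<forall>q\<in>sites L. F q = G q \<Longrightarrow> parity_state L F y = parity_state L G y"
  unfolding parity_state_def by auto

lemma parity_transition_Nil: "parity_transition L [] F F (\<lambda>_. 0)"
  unfolding parity_transition_def by auto

lemma parity_transition_append:
  "parity_transition L cs F G m \<Longrightarrow> parity_transition L ds G H n \<Longrightarrow>
    parity_transition L (cs @ ds) F H (\<lambda>y. m y + n y)"
  unfolding parity_transition_def by (auto simp: circuit_perm_append circuit_sign_exp_append)

lemma parity_transition_cong:
  assumes "parity_transition L cs F G n"
    and "\<forall>q\<in>sites L. F q = F' q" "\<forall>q\<in>sites L. G q = G' q" "\<forall>y. y \<subseteq> sites L \<longrightarrow> n y = n' y"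
  shows "parity_transition L cs F' G' n'"
  using assms parity_state_cong[of L F F'] parity_state_cong[of L G G']
  unfolding parity_transition_def by metis

lemma parity_transition_upt:
  assumes step: "\<And>k. a \<le> k \<Longrightarrow> k < b \<Longrightarrow> parity_transition L (cs k) (G k) (G (Suc k)) (n k)"
    and "a \<le> b"
  shows "parity_transition L (concat (map cs [a..<b])) (G a) (G b) (\<lambda>y. \<Sum>k = a..<b. n k y)"
  using \<open>a \<le> b\<close> step
proof (induction b rule: dec_induct)
  case base
  show ?case using parity_transition_Nil by simp
next
  case (step b)
  then have "parity_transition L (concat (map cs [a..<b]) @ cs b) (G a) (G (Suc b))
      (\<lambda>y. (\<Sum>k = a..<b. n k y) + n b y)"
    by (intro parity_transition_append) auto
  then show ?case using step.hyps by simp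
qed

lemma parity_transition_upt_rev:
  assumes step: "\<And>k. a \<le> k \<Longrightarrow> k < b \<Longrightarrow> parity_transition L (cs k) (G (Suc k)) (G k) (n k)"
    and "a \<le> b"
  shows "parity_transition L (concat (map cs (rev [a..<b]))) (G b) (G a) (\<lambda>y. \<Sum>k = a..<b. n k y)"
  using \<open>a \<le> b\<close> step
proof (induction b rule: dec_induct)
  case base
  show ?case using parity_transition_Nil by simp
next
  case (step b)
  then have "parity_transition L (cs b @ concat (map cs (rev [a..<b]))) (G (Suc b)) (G a)
      (\<lambda>y. n b y + (\<Sum>k = a..<b. n k y))"
    by (intro parity_transition_append) auto
  then show ?case using step.hyps by (simp add: add.commute)
qed

lemma parity_transition_concat_stationary:
  assumes "\<And>k. k \<in> set ks \<Longrightarrow> parity_transition L (cs k) F F (n k)"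
  shows "parity_transition L (concat (map cs ks)) F F (\<lambda>y. \<Sum>k\<leftarrow>ks. n k y)"
  using assms
proof (induction ks)
  case Nil
  show ?case using parity_transition_Nil by simp
next
  case (Cons k ks)
  then show ?case using parity_transition_append[of L "cs k" F F "n k"] by simp
qed

definition site_list :: "nat \<Rightarrow> site list" where
  "site_list L = List.product [0..<L] [0..<L]"

lemma set_site_list [simp]: "set (site_list L) = sites L"
  by (auto simp: site_list_def sites_def)

lemma distinct_site_list [simp]: "distinct (site_list L)"
  by (simp add: site_list_def distinct_product)

definition cnot_layer :: "nat \<Rightarrow> (site \<Rightarrow> bool) \<Rightarrow> (site \<Rightarrow> site) \<Rightarrow> layer" where
  "cnot_layer L T ctl = map (\<lambda>t. CNOT (ctl t) t) (filter T (site_list L))"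

definition cz_layer :: "nat \<Rightarrow> (site \<Rightarrow> bool) \<Rightarrow> (site \<Rightarrow> site) \<Rightarrow> (site \<Rightarrow> site) \<Rightarrow> layer" where
  "cz_layer L T u v = map (\<lambda>q. CZ (u q) (v q)) (filter T (site_list L))"

definition cnot_update ::
  "(site \<Rightarrow> bool) \<Rightarrow> (site \<Rightarrow> site) \<Rightarrow> (site \<Rightarrow> site set) \<Rightarrow> site \<Rightarrow> site set" where
  "cnot_update T ctl F q = (if T q then sym_diff (F q) (F (ctl q)) else F q)"

lemma layer_perm_cnots:
  assumes "distinct ts" "set ts \<subseteq> sites L" "\<forall>t\<in>set ts. ctl t \<in> sites L \<and> ctl t \<notin> set ts"
    and y: "y \<subseteq> sites L"
  shows "layer_perm (map (\<lambda>t. CNOT (ctl t) t) ts) (parity_state L F y)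
           = parity_state L (cnot_update (\<lambda>q. q \<in> set ts) ctl F) y"
  using assms(1-3)
proof (induction ts)
  case Nil
  show ?case by (simp add: parity_state_def cnot_update_def)
next
  case (Cons t ts)
  let ?F = "cnot_update (\<lambda>q. q \<in> set ts) ctl F"
  have IH: "layer_perm (map (\<lambda>t. CNOT (ctl t) t) ts) (parity_state L F y) = parity_state L ?F y"
    using Cons by auto
  have t: "t \<notin> set ts" "t \<in> sites L" "ctl t \<in> sites L" "ctl t \<notin> set ts" "ctl t \<noteq> t"
    using Cons.prems by auto
  have ctl_in: "ctl t \<in> parity_state L ?F y \<longleftrightarrow> odd (card (F (ctl t) \<inter> y))"
    using t unfolding parity_state_def cnot_update_def by auto
  have "finite y" using y by (rule finite_subset_sites)
  then show ?case
    using IH ctl_in t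
    by (auto simp: flip_def parity_state_def cnot_update_def odd_card_sym_diff_Int)
qed

lemma layer_sign_exp_cnots: "layer_sign_exp (map (\<lambda>t. CNOT (ctl t) t) ts) y = 0"
  by (induction ts arbitrary: y) auto

lemma layer_perm_czs: "layer_perm (map (\<lambda>q. CZ (u q) (v q)) ts) = id"
  by (induction ts) auto

lemma layer_sign_exp_czs:
  "distinct ts \<Longrightarrow> layer_sign_exp (map (\<lambda>q. CZ (u q) (v q)) ts) y = card {q \<in> set ts. u q \<in> y \<and> v q \<in> y}"
proof (induction ts)
  case Nil
  show ?case by simp
next
  case (Cons t ts)
  have "{q \<in> set (t # ts). u q \<in> y \<and> v q \<in> y} =
      (if u t \<in> y \<and> v t \<in> y then insert t {q \<in> set ts. u q \<in> y \<and> v q \<in> y}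
       else {q \<in> set ts. u q \<in> y \<and> v q \<in> y})"
    by auto
  then show ?case using Cons by (simp add: layer_perm_czs)
qed

lemma parity_transition_cnot_layer:
  assumes ctl: "\<forall>t\<in>sites L. T t \<longrightarrow> ctl t \<in> sites L \<and> \<not> T (ctl t)"
    and G: "\<forall>q\<in>sites L. G q = cnot_update T ctl F q"
  shows "parity_transition L [cnot_layer L T ctl] F G (\<lambda>_. 0)"
    and "parity_transition L [cnot_layer L T ctl] G F (\<lambda>_. 0)"
proof -
  have step: "parity_transition L [cnot_layer L T ctl] H (cnot_update T ctl H) (\<lambda>_. 0)" for H
    unfolding parity_transition_def
  proof (intro allI impI conjI)
    fix y assume y: "y \<subseteq> sites L"
    have "layer_perm (cnot_layer L T ctl) (parity_state L H y)
        = parity_state L (cnot_update (\<lambda>q. q \<in> set (filter T (site_list L))) ctl H) y"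
      unfolding cnot_layer_def using ctl y by (intro layer_perm_cnots) auto
    also have "\<dots> = parity_state L (cnot_update T ctl H) y"
      by (rule parity_state_cong) (auto simp: cnot_update_def)
    finally show "circuit_perm [cnot_layer L T ctl] (parity_state L H y)
        = parity_state L (cnot_update T ctl H) y" by simp
    show "circuit_sign_exp [cnot_layer L T ctl] (parity_state L H y) = 0"
      by (simp add: cnot_layer_def layer_sign_exp_cnots)
  qed
  show "parity_transition L [cnot_layer L T ctl] F G (\<lambda>_. 0)"
    using parity_transition_cong[OF step[of F]] G by auto
  have "\<forall>q\<in>sites L. cnot_update T ctl G q = F q"
    using ctl G by (auto simp: cnot_update_def)
  then show "parity_transition L [cnot_layer L T ctl] G F (\<lambda>_. 0)"
    using parity_transition_cong[OF step[of G]] by auto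
qed

lemma parity_transition_cz_layer:
  assumes "\<forall>q\<in>sites L. T q \<longrightarrow> u q \<in> sites L \<and> v q \<in> sites L"
  shows "parity_transition L [cz_layer L T u v] F F
     (\<lambda>y. card {q \<in> sites L. T q \<and> odd (card (F (u q) \<inter> y)) \<and> odd (card (F (v q) \<inter> y))})"
  unfolding parity_transition_def
proof (intro allI impI conjI)
  fix y assume y: "y \<subseteq> sites L"
  show "circuit_perm [cz_layer L T u v] (parity_state L F y) = parity_state L F y"
    by (simp add: cz_layer_def layer_perm_czs)
  have "layer_sign_exp (cz_layer L T u v) (parity_state L F y)
      = card {q \<in> set (filter T (site_list L)). u q \<in> parity_state L F y \<and> v q \<in> parity_state L F y}"
    unfolding cz_layer_def by (rule layer_sign_exp_czs) simp
  also have "\<dots> = card {q \<in> sites L. T q \<and> odd (card (F (u q) \<inter> y)) \<and> odd (card (F (v q) \<inter> y))}"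
    using assms by (intro arg_cong[where f = card]) (auto simp: parity_state_def)
  finally show "circuit_sign_exp [cz_layer L T u v] (parity_state L F y)
      = card {q \<in> sites L. T q \<and> odd (card (F (u q) \<inter> y)) \<and> odd (card (F (v q) \<inter> y))}"
    by simp
qed

lemma parity_transition_conjugated_cz:
  assumes c1: "\<forall>t\<in>sites L. T1 t \<longrightarrow> c1 t \<in> sites L \<and> \<not> T1 (c1 t)"
    and c2: "\<forall>t\<in>sites L. T2 t \<longrightarrow> c2 t \<in> sites L \<and> \<not> T2 (c2 t)"
    and c3: "\<forall>t\<in>sites L. T3 t \<longrightarrow> c3 t \<in> sites L \<and> \<not> T3 (c3 t)"
    and cz: "\<forall>q\<in>sites L. T q \<longrightarrow> u q \<in> sites L \<and> v q \<in> sites L"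
    and F3: "F3 = cnot_update T3 c3 (cnot_update T2 c2 (cnot_update T1 c1 F))"
  shows "parity_transition L
    [cnot_layer L T1 c1, cnot_layer L T2 c2, cnot_layer L T3 c3, cz_layer L T u v,
     cnot_layer L T3 c3, cnot_layer L T2 c2, cnot_layer L T1 c1] F F
    (\<lambda>y. card {q \<in> sites L. T q \<and> odd (card (F3 (u q) \<inter> y)) \<and> odd (card (F3 (v q) \<inter> y))})"
proof -
  define F1 F2 where "F1 = cnot_update T1 c1 F" and "F2 = cnot_update T2 c2 F1"
  have t1: "parity_transition L [cnot_layer L T1 c1] F F1 (\<lambda>_. 0)"
    "parity_transition L [cnot_layer L T1 c1] F1 F (\<lambda>_. 0)"
    using parity_transition_cnot_layer[OF c1, of F1 F] by (simp_all add: F1_def)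
  have t2: "parity_transition L [cnot_layer L T2 c2] F1 F2 (\<lambda>_. 0)"
    "parity_transition L [cnot_layer L T2 c2] F2 F1 (\<lambda>_. 0)"
    using parity_transition_cnot_layer[OF c2, of F2 F1] by (simp_all add: F2_def)
  have t3: "parity_transition L [cnot_layer L T3 c3] F2 F3 (\<lambda>_. 0)"
    "parity_transition L [cnot_layer L T3 c3] F3 F2 (\<lambda>_. 0)"
    using parity_transition_cnot_layer[OF c3, of F3 F2] by (simp_all add: F1_def F2_def F3)
  from parity_transition_append[OF t1(1) parity_transition_append[OF t2(1)
      parity_transition_append[OF t3(1) parity_transition_append[OF parity_transition_cz_layer[OF cz]
      parity_transition_append[OF t3(2) parity_transition_append[OF t2(2) t1(2)]]]]]]
  show ?thesis by simp
qed

lemma valid_layer_map: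
  assumes "distinct xs" "\<forall>a\<in>set xs. valid_gate L (g a)"
    and "\<forall>a\<in>set xs. \<forall>b\<in>set xs. a \<noteq> b \<longrightarrow> gate_support (g a) \<inter> gate_support (g b) = {}"
  shows "valid_layer L (map g xs)"
  using assms by (auto simp: valid_layer_def nth_eq_iff_index_eq)

lemma valid_cnot_layer:
  assumes "\<forall>t\<in>sites L. T t \<longrightarrow> ctl t \<in> sites L \<and> adjacent (ctl t) t \<and> \<not> T (ctl t)"
    and "inj_on ctl {t \<in> sites L. T t}"
  shows "valid_layer L (cnot_layer L T ctl)"
  unfolding cnot_layer_def using assms by (intro valid_layer_map) (auto simp: inj_on_def)

lemma valid_cz_layer:
  assumes "\<forall>t\<in>sites L. T t \<longrightarrow> u t \<in> sites L \<and> v t \<in> sites L \<and> adjacent (u t) (v t)"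
    and "\<forall>t\<in>sites L. \<forall>t'\<in>sites L. T t \<longrightarrow> T t' \<longrightarrow> t \<noteq> t' \<longrightarrow> {u t, v t} \<inter> {u t', v t'} = {}"
  shows "valid_layer L (cz_layer L T u v)"
  unfolding cz_layer_def using assms by (intro valid_layer_map) auto

lemma not_single_qubit_gate_cnot_layer: "g \<in> set (cnot_layer L T ctl) \<Longrightarrow> \<not> single_qubit_gate g"
  by (auto simp: cnot_layer_def)

lemma not_single_qubit_gate_cz_layer: "g \<in> set (cz_layer L T u v) \<Longrightarrow> \<not> single_qubit_gate g"
  by (auto simp: cz_layer_def)

lemma length_cnot_layer: "length (cnot_layer L T ctl) = card {t \<in> sites L. T t}"
  by (simp add: cnot_layer_def distinct_length_filter Collect_conj_eq Int_commute)

lemma length_cz_layer: "length (cz_layer L T u v) = card {t \<in> sites L. T t}"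
  by (simp add: cz_layer_def distinct_length_filter Collect_conj_eq Int_commute)

subsection \<open>Sign operators between Jordan--Wigner encodings\<close>

definition preceding :: "nat \<Rightarrow> (site \<Rightarrow> nat) \<Rightarrow> site \<Rightarrow> site set" where
  "preceding L m j = {k \<in> sites L. m k < m j}"

lemma monomial_op_op_eq:
  "monomial_op L A \<sigma> \<phi> \<Longrightarrow> monomial_op L B \<sigma> \<psi> \<Longrightarrow> (\<And>y. y \<in> Pow (sites L) \<Longrightarrow> \<phi> y = \<psi> y) \<Longrightarrow>
    op_eq L A B"
  unfolding monomial_op_def op_eq_def by auto

lemma monomial_op_Zprod: "finite K \<Longrightarrow> monomial_op L (Zprod K) id (\<lambda>y. (-1) ^ card (K \<inter> y))"
  by (simp add: monomial_op_def Zprod_def prod.If_cases Int_def)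

lemma monomial_op_majorana:
  assumes j: "j \<in> sites L"
  shows "monomial_op L (majorana L m j b) (flip j)
    (\<lambda>y. (if b then (if j \<in> y then - \<i> else \<i>) else 1) * (-1) ^ card (preceding L m j \<inter> y))"
proof -
  have "monomial_op L (if b then pauliY j else pauliX j) (flip j)
      (\<lambda>y. if b then (if j \<in> y then - \<i> else \<i>) else 1)"
    using j by (auto simp: monomial_op_def pauliX_def pauliY_def flip_def)
  from monomial_op_opmult[OF this monomial_op_Zprod] show ?thesis
    unfolding majorana_def preceding_def by (auto intro: monomial_op_cong)
qed

text \<open>Conjugating a Majorana operator by the diagonal sign operator \<open>(-1) ^ n y\<close> multiplies its
  column \<open>y\<close> by \<open>(-1) ^ (n (flip j y) + n y)\<close>; this has to match the change of the Jordan--Wigner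
  string, whose sign is \<open>(-1) ^ card (preceding L m j \<inter> y)\<close>.\<close>

lemma maps_encoding_sign_op:
  assumes W: "monomial_op L W id (\<lambda>y. (-1) ^ n y)"
    and par: "\<And>j y. j \<in> sites L \<Longrightarrow> y \<subseteq> sites L \<Longrightarrow>
      even (n (flip j y) + n y + card (preceding L m j \<inter> y) + card (preceding L m' j \<inter> y))"
  shows "maps_encoding L W m m'"
  unfolding maps_encoding_def
proof (intro ballI allI)
  fix j b assume j: "j \<in> sites L"
  define c :: "site set \<Rightarrow> complex" where "c y = (if b then (if j \<in> y then - \<i> else \<i>) else 1)" for y
  have "monomial_op L (opmult L (opmult L W (majorana L m j b)) (adj W)) (flip j)
      (\<lambda>y. (-1) ^ n (flip j y) * (c y * (-1) ^ card (preceding L m j \<inter> y)) * cnj ((-1) ^ n y))"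
    using monomial_op_opmult[OF monomial_op_opmult[OF W monomial_op_majorana[OF j, of m b]]
        monomial_op_adj[OF W]]
    unfolding c_def id_comp comp_id id_apply by simp
  moreover have "monomial_op L (majorana L m' j b) (flip j)
      (\<lambda>y. c y * (-1) ^ card (preceding L m' j \<inter> y))"
    using monomial_op_majorana[OF j, of m' b] by (simp add: c_def)
  moreover have "(-1) ^ n (flip j y) * (c y * (-1) ^ card (preceding L m j \<inter> y)) * cnj ((-1) ^ n y)
      = c y * (-1) ^ card (preceding L m' j \<inter> y)" if y: "y \<in> Pow (sites L)" for y
  proof -
    have "even (n (flip j y) + card (preceding L m j \<inter> y) + n y + card (preceding L m' j \<inter> y))"
      using par[OF j] y by (simp add: algebra_simps)
    then have "(-1 :: complex) ^ (n (flip j y) + card (preceding L m j \<inter> y) + n y)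
        = (-1) ^ card (preceding L m' j \<inter> y)"
      by (simp add: minus_one_power_iff)
    then show ?thesis by (simp add: power_add mult.assoc)
  qed
  ultimately show "op_eq L (opmult L (opmult L W (majorana L m j b)) (adj W)) (majorana L m' j b)"
    by (rule monomial_op_op_eq)
qed

definition pair_count :: "('a \<Rightarrow> 'a \<Rightarrow> bool) \<Rightarrow> 'a set \<Rightarrow> nat" where
  "pair_count E A = (\<Sum>q\<in>A. card {p \<in> A. E p q})"

lemma pair_count_insert:
  assumes A: "finite A" "j \<notin> A" and asym: "\<forall>p q. E p q \<longrightarrow> \<not> E q p"
  shows "pair_count E (insert j A) = pair_count E A + card {k \<in> A. E j k \<or> E k j}"
proof -
  have row: "card {p \<in> insert j A. E p q} = card {p \<in> A. E p q} + (if E j q then 1 else 0)"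
    if "q \<in> A" for q
  proof -
    have "{p \<in> insert j A. E p q} = (if E j q then insert j {p \<in> A. E p q} else {p \<in> A. E p q})"
      by auto
    then show ?thesis using A by auto
  qed
  have "{p \<in> insert j A. E p j} = {p \<in> A. E p j}" using asym by auto
  then have "pair_count E (insert j A) = card {p \<in> A. E p j} + (\<Sum>q\<in>A. card {p \<in> insert j A. E p q})"
    using A by (simp add: pair_count_def)
  also have "(\<Sum>q\<in>A. card {p \<in> insert j A. E p q}) =
      (\<Sum>q\<in>A. card {p \<in> A. E p q} + (if E j q then 1 else 0))"
    by (intro sum.cong refl row)
  also have "\<dots> = pair_count E A + card {q \<in> A. E j q}"
    using A by (simp add: pair_count_def sum.distrib sum.If_cases Int_def)
  also have "card {k \<in> A. E j k \<or> E k j} = card {q \<in> A. E j q} + card {p \<in> A. E p j}"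
    using A asym by (subst card_Un_disjoint[symmetric]) (auto intro: arg_cong[where f = card])
  ultimately show ?thesis by simp
qed

lemma pair_count_flip_parity:
  assumes "finite A" and asym: "\<forall>p q. E p q \<longrightarrow> \<not> E q p"
  shows "even (pair_count E (flip j A) + pair_count E A + card {k \<in> A - {j}. E j k \<or> E k j})"
proof -
  define C where "C = card {k \<in> A - {j}. E j k \<or> E k j}"
  have "pair_count E (insert j (A - {j})) = pair_count E (A - {j}) + C"
    unfolding C_def using assms by (intro pair_count_insert) auto
  moreover have "{flip j A, A} = {insert j (A - {j}), A - {j}}"
    by (auto simp: flip_def)
  ultimately have "pair_count E (flip j A) + pair_count E A = 2 * pair_count E (A - {j}) + C"
    by (cases "j \<in> A") (auto simp: flip_def insert_absorb doubleton_eq_iff)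
  then show ?thesis unfolding C_def by simp
qed

lemma pair_count_flip_preceding:
  assumes asym: "\<forall>p q. E p q \<longrightarrow> \<not> E q p" and j: "j \<in> sites L" and y: "y \<subseteq> sites L"
    and sd: "sym_diff (preceding L m j) (preceding L m' j) = {k \<in> sites L. k \<noteq> j \<and> (E j k \<or> E k j)}"
  shows "even (pair_count E (flip j y) + pair_count E y +
    card (preceding L m j \<inter> y) + card (preceding L m' j \<inter> y))"
proof -
  have fin: "finite y" using y by (rule finite_subset_sites)
  have "sym_diff (preceding L m j \<inter> y) (preceding L m' j \<inter> y) = {k \<in> y - {j}. E j k \<or> E k j}"
    using sd y by blast
  then have "even (card (preceding L m j \<inter> y) + card (preceding L m' j \<inter> y) +
      card {k \<in> y - {j}. E j k \<or> E k j})"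
    using even_card_sym_diff[of "preceding L m j \<inter> y" "preceding L m' j \<inter> y"] fin by simp
  then show ?thesis using pair_count_flip_parity[OF fin asym, of j] by presburger
qed

subsection \<open>Strips of an interval partition\<close>

definition strip_start :: "nat list \<Rightarrow> nat \<Rightarrow> nat" where
  "strip_start ws c = sum_list (take (strip_index ws c) ws)"

definition strip_width :: "nat list \<Rightarrow> nat \<Rightarrow> nat" where
  "strip_width ws c = ws ! strip_index ws c"

definition strip_offset :: "nat list \<Rightarrow> nat \<Rightarrow> nat" where
  "strip_offset ws c = c - strip_start ws c"

lemma sum_list_take_Suc: "j < length ws \<Longrightarrow> sum_list (take (Suc j) ws) = sum_list (take j ws) + ws ! j"
  by (simp add: take_Suc_conv_app_nth)

lemma sum_list_take_mono: "i \<le> j \<Longrightarrow> sum_list (take i ws) \<le> sum_list (take j (ws :: nat list))"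
  using take_add[of i "j - i" ws] by simp

lemma strip_index_eqI:
  assumes "j < length ws" "sum_list (take j ws) \<le> c" "c < sum_list (take (Suc j) ws)"
  shows "strip_index ws c = j"
  unfolding strip_index_def
proof (rule the_equality)
  fix j' assume j': "j' < length ws \<and> sum_list (take j' ws) \<le> c \<and> c < sum_list (take (Suc j') ws)"
  show "j' = j"
  proof (rule ccontr)
    assume "j' \<noteq> j"
    then consider "Suc j' \<le> j" | "Suc j \<le> j'" by linarith
    then show False
      by cases (use j' assms sum_list_take_mono[of "Suc j'" j ws] sum_list_take_mono[of "Suc j" j' ws] in linarith)+
  qed
qed (use assms in simp)

lemma strip_index_exists:
  assumes "interval_partition L ws" "c < L"
  shows "\<exists>j < length ws. sum_list (take j ws) \<le> c \<and> c < sum_list (take (Suc j) ws)"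
proof -
  let ?P = "\<lambda>j. c < sum_list (take (Suc j) ws)"
  have "ws \<noteq> []" using assms by (auto simp: interval_partition_def)
  then have last: "?P (length ws - 1)" using assms by (simp add: interval_partition_def)
  define j where "j = (LEAST j. ?P j)"
  have "?P j" unfolding j_def using last by (rule LeastI)
  moreover have "j \<le> length ws - 1" unfolding j_def using last by (rule Least_le)
  then have "j < length ws" using \<open>ws \<noteq> []\<close> by (cases ws) auto
  moreover have "sum_list (take j ws) \<le> c"
  proof (cases j)
    case (Suc i)
    then have "\<not> ?P i" unfolding j_def by (metis lessI not_less_Least)
    then show ?thesis using Suc by simp
  qed simp
  ultimately show ?thesis by blast
qed

lemma strip_bounds:
  assumes ip: "interval_partition L ws" and c: "c < L"
  shows "strip_index ws c < length ws" "strip_start ws c \<le> c"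
    "c < strip_start ws c + strip_width ws c" "strip_start ws c + strip_width ws c \<le> L"
proof -
  obtain j where j: "j < length ws" "sum_list (take j ws) \<le> c" "c < sum_list (take (Suc j) ws)"
    using strip_index_exists[OF ip c] by blast
  have idx: "strip_index ws c = j" using strip_index_eqI[OF j] .
  have "sum_list (take (Suc j) ws) \<le> sum_list (take (length ws) ws)"
    using j by (intro sum_list_take_mono) simp
  then show "strip_index ws c < length ws" "strip_start ws c \<le> c"
    "c < strip_start ws c + strip_width ws c" "strip_start ws c + strip_width ws c \<le> L"
    using j ip sum_list_take_Suc[OF j(1)]
    by (auto simp: idx strip_start_def strip_width_def interval_partition_def)
qed

lemma strip_index_eq_iff:
  assumes ip: "interval_partition L ws" and c: "c < L" and c': "c' < L"
  shows "strip_index ws c' = strip_index ws c \<longleftrightarrow>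
    strip_start ws c \<le> c' \<and> c' < strip_start ws c + strip_width ws c"
proof
  assume "strip_index ws c' = strip_index ws c"
  then show "strip_start ws c \<le> c' \<and> c' < strip_start ws c + strip_width ws c"
    using strip_bounds[OF ip c'] by (simp add: strip_start_def strip_width_def)
next
  assume "strip_start ws c \<le> c' \<and> c' < strip_start ws c + strip_width ws c"
  then show "strip_index ws c' = strip_index ws c"
    using strip_bounds(1)[OF ip c] sum_list_take_Suc[OF strip_bounds(1)[OF ip c]]
    by (intro strip_index_eqI) (auto simp: strip_start_def strip_width_def)
qed

lemma strip_end_le_start:
  assumes ip: "interval_partition L ws" and c: "c < L"
    and less: "strip_index ws c < strip_index ws c'"
  shows "strip_start ws c + strip_width ws c \<le> strip_start ws c'"
proof -
  have "strip_start ws c + strip_width ws c = sum_list (take (Suc (strip_index ws c)) ws)"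
    using sum_list_take_Suc[OF strip_bounds(1)[OF ip c]] by (simp add: strip_start_def strip_width_def)
  also have "\<dots> \<le> strip_start ws c'"
    unfolding strip_start_def using less by (intro sum_list_take_mono) simp
  finally show ?thesis .
qed

lemma strip_index_mono:
  assumes ip: "interval_partition L ws" and "c \<le> c'" "c' < L"
  shows "strip_index ws c \<le> strip_index ws c'"
proof (rule ccontr)
  assume "\<not> ?thesis"
  then have "strip_start ws c' + strip_width ws c' \<le> strip_start ws c"
    using assms by (intro strip_end_le_start) auto
  then show False using strip_bounds[OF ip, of c] strip_bounds[OF ip \<open>c' < L\<close>] assms by linarith
qed

lemma strip_offset_le: "strip_offset ws c \<le> c"
  by (simp add: strip_offset_def)

lemma strip_offset_pred:
  assumes ip: "interval_partition L ws" and c: "c < L" and off: "1 \<le> strip_offset ws c"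
  shows "strip_index ws (c - 1) = strip_index ws c" "strip_start ws (c - 1) = strip_start ws c"
    "strip_offset ws (c - 1) = strip_offset ws c - 1"
proof -
  show idx: "strip_index ws (c - 1) = strip_index ws c"
    using off strip_bounds[OF ip c] by (subst strip_index_eq_iff[OF ip c]) (auto simp: strip_offset_def)
  then show "strip_start ws (c - 1) = strip_start ws c"
    by (simp add: strip_start_def)
  then show "strip_offset ws (c - 1) = strip_offset ws c - 1"
    by (simp add: strip_offset_def)
qed

subsection \<open>Inversions between the boustrophedon and the column-major ordering\<close>

definition column_major :: "nat \<Rightarrow> site \<Rightarrow> nat" where
  "column_major L p = L * snd p + fst p"

definition strip_inversion :: "nat list \<Rightarrow> site \<Rightarrow> site \<Rightarrow> bool" where
  "strip_inversion ws p q \<longleftrightarrow> strip_index ws (snd p) = strip_index ws (snd q) \<and> snd p < snd q \<and>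
      (fst q < fst p \<or> fst p = fst q \<and> odd (fst p))"

lemma boustro_eq:
  "boustro L ws (r, c) = L * strip_start ws c + strip_width ws c * r +
     (if even r then strip_offset ws c else strip_width ws c - 1 - strip_offset ws c)"
  by (simp add: boustro_def strip_start_def strip_width_def strip_offset_def Let_def)

lemma mult_add_less_mult_add_iff:
  fixes w r r' t t' :: nat
  assumes "t < w" "t' < w"
  shows "w * r + t < w * r' + t' \<longleftrightarrow> r < r' \<or> r = r' \<and> t < t'"
proof -
  have less: "w * r + t < w * r' + t'" if "r < r'" "t < w" for r r' t t' :: nat
  proof -
    have "w * Suc r \<le> w * r'" using that by (intro mult_le_mono2) simp
    then show ?thesis using that by simp
  qed
  show ?thesis
    using less[of r r' t t'] less[of r' r t' t] assms by (cases r r' rule: linorder_cases) auto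
qed

lemma boustro_less_of_strip_index_less:
  assumes ip: "interval_partition L ws" and r: "r < L" and c: "c < L"
    and less: "strip_index ws c < strip_index ws c'"
  shows "boustro L ws (r, c) < boustro L ws (r', c')"
proof -
  let ?a = "strip_start ws c" and ?w = "strip_width ws c"
  have "?w * Suc r \<le> ?w * L" using r by (intro mult_le_mono2) simp
  then have "boustro L ws (r, c) < L * ?a + ?w * L"
    using strip_bounds[OF ip c] by (auto simp: boustro_eq strip_offset_def)
  also have "\<dots> = L * (?a + ?w)" by (simp add: algebra_simps)
  also have "\<dots> \<le> L * strip_start ws c'"
    using strip_end_le_start[OF ip c less] by (intro mult_le_mono2)
  also have "\<dots> \<le> boustro L ws (r', c')" by (simp add: boustro_eq)
  finally show ?thesis .
qed

lemma boustro_same_strip_less_iff: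
  assumes ip: "interval_partition L ws" and c: "c < L" and c': "c' < L"
    and same: "strip_index ws c = strip_index ws c'"
  shows "boustro L ws (r, c) < boustro L ws (r', c') \<longleftrightarrow>
    r < r' \<or> r = r' \<and> (even r \<and> c < c' \<or> odd r \<and> c' < c)"
proof -
  define a w where "a = strip_start ws c" and "w = strip_width ws c"
  have a': "strip_start ws c' = a" "strip_width ws c' = w"
    using same by (simp_all add: a_def w_def strip_start_def strip_width_def)
  have bc: "a \<le> c" "c < a + w" "a \<le> c'" "c' < a + w"
    using strip_bounds(2,3)[OF ip c] strip_bounds(2,3)[OF ip c'] a' by (auto simp: a_def w_def)
  define t t' where "t = (if even r then c - a else w - 1 - (c - a))"
    and "t' = (if even r' then c' - a else w - 1 - (c' - a))"
  have "t < w" "t' < w" using bc by (auto simp: t_def t'_def)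
  moreover have "boustro L ws (r, c) = L * a + (w * r + t)" "boustro L ws (r', c') = L * a + (w * r' + t')"
    using a' by (simp_all add: boustro_eq a_def w_def t_def t'_def strip_offset_def)
  moreover have "r = r' \<Longrightarrow> t < t' \<longleftrightarrow> even r \<and> c < c' \<or> odd r \<and> c' < c"
    using bc by (auto simp: t_def t'_def)
  ultimately show ?thesis using mult_add_less_mult_add_iff by auto
qed

lemma boustro_column_major_disagree_iff:
  assumes ip: "interval_partition L ws" and p: "p \<in> sites L" and q: "q \<in> sites L" and "p \<noteq> q"
  shows "(boustro L ws p < boustro L ws q) \<noteq> (column_major L p < column_major L q) \<longleftrightarrow>
    strip_inversion ws p q \<or> strip_inversion ws q p"
proof -
  obtain r c r' c' where pq: "p = (r, c)" "q = (r', c')" by (cases p, cases q)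
  have rc: "r < L" "c < L" "r' < L" "c' < L" using p q pq by (auto simp: sites_def)
  have cm: "column_major L p < column_major L q \<longleftrightarrow> c < c' \<or> c = c' \<and> r < r'"
    using mult_add_less_mult_add_iff[of r L r' c c'] rc pq by (simp add: column_major_def)
  consider (lt) "strip_index ws c < strip_index ws c'" | (gt) "strip_index ws c' < strip_index ws c"
    | (eq) "strip_index ws c = strip_index ws c'" by linarith
  then show ?thesis
  proof cases
    case lt
    then have "c < c'" using strip_index_mono[OF ip _ rc(2), of c'] by fastforce
    then show ?thesis
      using cm lt boustro_less_of_strip_index_less[OF ip rc(1,2) lt, of r'] by (auto simp: strip_inversion_def pq)
  next
    case gt
    then have "c' < c" using strip_index_mono[OF ip _ rc(4), of c] by fastforce
    then show ?thesis
      using cm gt boustro_less_of_strip_index_less[OF ip rc(3,4) gt, of r] by (auto simp: strip_inversion_def pq)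
  next
    case eq
    then show ?thesis
      using cm boustro_same_strip_less_iff[OF ip rc(2,4) eq] \<open>p \<noteq> q\<close>
      by (auto simp: strip_inversion_def pq)
  qed
qed

lemma strip_inversion_asym: "\<forall>p q. strip_inversion ws p q \<longrightarrow> \<not> strip_inversion ws q p"
  by (auto simp: strip_inversion_def)

lemma sym_diff_preceding_boustro:
  assumes ip: "interval_partition L ws" and j: "j \<in> sites L"
  shows "sym_diff (preceding L (boustro L ws) j) (preceding L (column_major L) j) =
    {k \<in> sites L. k \<noteq> j \<and> (strip_inversion ws j k \<or> strip_inversion ws k j)}"
  using boustro_column_major_disagree_iff[OF ip _ j] unfolding preceding_def by blast

subsection \<open>The reordering circuit of one partition\<close>

text \<open>Row \<open>r + 1\<close> lies south of row \<open>r\<close>.\<close>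

definition west :: "site \<Rightarrow> site" where "west t = (fst t, snd t - 1)"
definition north :: "site \<Rightarrow> site" where "north t = (fst t - 1, snd t)"
definition south :: "site \<Rightarrow> site" where "south t = (Suc (fst t), snd t)"
definition south_west :: "site \<Rightarrow> site" where "south_west t = (Suc (fst t), snd t - 1)"

definition row_segment :: "nat list \<Rightarrow> site \<Rightarrow> site set" where
  "row_segment ws t = {p. fst p = fst t \<and> strip_start ws (snd t) \<le> snd p \<and> snd p \<le> snd t}"

definition block :: "nat \<Rightarrow> nat list \<Rightarrow> site \<Rightarrow> site set" where
  "block L ws t = {p. fst t \<le> fst p \<and> fst p < L \<and> strip_start ws (snd t) \<le> snd p \<and> snd p \<le> snd t}"

definition row_inversions :: "nat list \<Rightarrow> site \<Rightarrow> site set" where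
  "row_inversions ws q =
     {p. fst p = fst q \<and> odd (fst q) \<and> strip_start ws (snd q) \<le> snd p \<and> snd p < snd q}"

definition block_inversions :: "nat \<Rightarrow> nat list \<Rightarrow> site \<Rightarrow> site set" where
  "block_inversions L ws q =
     {p. fst q < fst p \<and> fst p < L \<and> strip_start ws (snd q) \<le> snd p \<and> snd p < snd q}"

lemma strip_inversion_iff:
  assumes ip: "interval_partition L ws" and p: "p \<in> sites L" and q: "q \<in> sites L"
  shows "strip_inversion ws p q \<longleftrightarrow> p \<in> row_inversions ws q \<or> p \<in> block_inversions L ws q"
proof (cases "snd p < snd q")
  case True
  then have "strip_index ws (snd p) = strip_index ws (snd q) \<longleftrightarrow> strip_start ws (snd q) \<le> snd p"
    using strip_index_eq_iff[OF ip, of "snd q" "snd p"] strip_bounds(3)[OF ip, of "snd q"] p q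
    by (auto simp: mem_sites_iff)
  then show ?thesis
    using True p by (auto simp: strip_inversion_def row_inversions_def block_inversions_def mem_sites_iff)
qed (auto simp: strip_inversion_def row_inversions_def block_inversions_def)

definition row_phase :: "nat list \<Rightarrow> site set \<Rightarrow> nat" where
  "row_phase ws y = card {q \<in> y. odd (card (row_inversions ws q \<inter> y))}"

definition block_phase :: "nat \<Rightarrow> nat list \<Rightarrow> site set \<Rightarrow> nat" where
  "block_phase L ws y = card {q \<in> y. odd (card (block_inversions L ws q \<inter> y))}"

lemma even_phases_add_pair_count:
  assumes ip: "interval_partition L ws" and y: "y \<subseteq> sites L"
  shows "even (row_phase ws y + block_phase L ws y + pair_count (strip_inversion ws) y)"
proof -
  have fin: "finite y" using y by (rule finite_subset_sites)
  have "card {p \<in> y. strip_inversion ws p q} =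
      card (row_inversions ws q \<inter> y) + card (block_inversions L ws q \<inter> y)" if "q \<in> y" for q
  proof -
    have "{p \<in> y. strip_inversion ws p q} = (row_inversions ws q \<inter> y) \<union> (block_inversions L ws q \<inter> y)"
      using strip_inversion_iff[OF ip] y that by blast
    moreover have "(row_inversions ws q \<inter> y) \<inter> (block_inversions L ws q \<inter> y) = {}"
      by (auto simp: row_inversions_def block_inversions_def)
    ultimately show ?thesis using fin by (simp add: card_Un_disjoint)
  qed
  then have "pair_count (strip_inversion ws) y =
      (\<Sum>q\<in>y. card (row_inversions ws q \<inter> y)) + (\<Sum>q\<in>y. card (block_inversions L ws q \<inter> y))"
    by (simp add: pair_count_def sum.distrib)
  then show ?thesis
    using even_sum_add_card_odd[OF fin, of "\<lambda>q. card (row_inversions ws q \<inter> y)"]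
      even_sum_add_card_odd[OF fin, of "\<lambda>q. card (block_inversions L ws q \<inter> y)"]
    unfolding row_phase_def block_phase_def by presburger
qed

lemma west_in_strip:
  assumes ip: "interval_partition L ws" and t: "t \<in> sites L" and off: "1 \<le> strip_offset ws (snd t)"
  shows "west t \<in> sites L" "1 \<le> snd t" "strip_start ws (snd (west t)) = strip_start ws (snd t)"
    "strip_offset ws (snd (west t)) = strip_offset ws (snd t) - 1"
proof -
  show "1 \<le> snd t" using off strip_offset_le[of ws "snd t"] by simp
  then show "west t \<in> sites L" using t by (auto simp: west_def mem_sites_iff)
  show "strip_start ws (snd (west t)) = strip_start ws (snd t)"
    "strip_offset ws (snd (west t)) = strip_offset ws (snd t) - 1"
    using strip_offset_pred[OF ip _ off] t by (auto simp: west_def mem_sites_iff)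
qed

lemma row_segment_offset_0:
  assumes ip: "interval_partition L ws" and t: "t \<in> sites L" and off: "strip_offset ws (snd t) = 0"
  shows "row_segment ws t = {t}"
proof -
  have "strip_start ws (snd t) = snd t"
    using off strip_bounds(2)[OF ip, of "snd t"] t by (simp add: strip_offset_def mem_sites_iff)
  then show ?thesis by (cases t) (auto simp: row_segment_def)
qed

lemma row_segment_west:
  assumes ip: "interval_partition L ws" and t: "t \<in> sites L" and off: "1 \<le> strip_offset ws (snd t)"
  shows "row_segment ws t = sym_diff {t} (row_segment ws (west t))"
  using west_in_strip[OF ip t off] strip_bounds(2)[OF ip, of "snd t"] t
  by (cases t) (auto simp: row_segment_def west_def mem_sites_iff)

lemma row_inversions_eq_row_segment_west:
  assumes ip: "interval_partition L ws" and t: "t \<in> sites L" and off: "1 \<le> strip_offset ws (snd t)"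
    and "odd (fst t)"
  shows "row_inversions ws t = row_segment ws (west t)"
  using west_in_strip[OF ip t off] assms(4)
  by (auto simp: row_inversions_def row_segment_def west_def)

lemma odd_card_row_inversions_offset:
  assumes "q \<in> sites L" "odd (card (row_inversions ws q \<inter> y))"
  shows "strip_offset ws (snd q) \<in> {1..<L}"
proof -
  obtain p where "p \<in> row_inversions ws q"
    using assms(2) by (metis card.empty disjoint_iff even_zero)
  then show ?thesis
    using assms(1) strip_offset_le[of ws "snd q"] by (auto simp: row_inversions_def strip_offset_def mem_sites_iff)
qed

lemma block_sym_diff_south: "fst t < L \<Longrightarrow> sym_diff (row_segment ws t) (block L ws (south t)) = block L ws t"
  by (auto simp: row_segment_def block_def south_def)

definition row_stage :: "nat list \<Rightarrow> nat \<Rightarrow> site \<Rightarrow> site set" where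
  "row_stage ws k t = (if strip_offset ws (snd t) \<le> k then row_segment ws t else {t})"

definition row_cnot_layer :: "nat \<Rightarrow> nat list \<Rightarrow> nat \<Rightarrow> layer" where
  "row_cnot_layer L ws k = cnot_layer L (\<lambda>t. strip_offset ws (snd t) = Suc k) west"

definition row_cz_layer :: "nat \<Rightarrow> nat list \<Rightarrow> nat \<Rightarrow> layer" where
  "row_cz_layer L ws k = cz_layer L (\<lambda>t. strip_offset ws (snd t) = Suc k \<and> odd (fst t)) id west"

text \<open>When the CZ gates of \<open>row_step L ws k\<close> act, \<open>west t\<close> holds the parity of its row segment,
  which for odd rows is \<open>row_inversions ws t\<close>; this is how the row stage produces \<open>row_phase\<close>.\<close>

definition row_step :: "nat \<Rightarrow> nat list \<Rightarrow> nat \<Rightarrow> layer list" where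
  "row_step L ws k = [row_cz_layer L ws k, row_cnot_layer L ws k]"

lemma row_stage_last: "t \<in> sites L \<Longrightarrow> row_stage ws (L - 1) t = row_segment ws t"
  using strip_offset_le[of ws "snd t"] by (auto simp: row_stage_def mem_sites_iff)

lemma parity_transition_row_cnot_layer:
  assumes ip: "interval_partition L ws"
  shows "parity_transition L [row_cnot_layer L ws k] (row_stage ws k) (row_stage ws (Suc k)) (\<lambda>_. 0)"
    "parity_transition L [row_cnot_layer L ws k] (row_stage ws (Suc k)) (row_stage ws k) (\<lambda>_. 0)"
proof -
  let ?T = "\<lambda>t. strip_offset ws (snd t) = Suc k"
  have ctl: "\<forall>t\<in>sites L. ?T t \<longrightarrow> west t \<in> sites L \<and> \<not> ?T (west t)"
    using west_in_strip[OF ip] by auto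
  have "\<forall>q\<in>sites L. row_stage ws (Suc k) q = cnot_update ?T west (row_stage ws k) q"
  proof
    fix q assume q: "q \<in> sites L"
    show "row_stage ws (Suc k) q = cnot_update ?T west (row_stage ws k) q"
    proof (cases "?T q")
      case True
      then show ?thesis
        using west_in_strip[OF ip q] row_segment_west[OF ip q] by (simp add: row_stage_def cnot_update_def)
    qed (auto simp: row_stage_def cnot_update_def)
  qed
  from parity_transition_cnot_layer[OF ctl this]
  show "parity_transition L [row_cnot_layer L ws k] (row_stage ws k) (row_stage ws (Suc k)) (\<lambda>_. 0)"
    "parity_transition L [row_cnot_layer L ws k] (row_stage ws (Suc k)) (row_stage ws k) (\<lambda>_. 0)"
    unfolding row_cnot_layer_def .
qed

lemma parity_transition_row_step:
  assumes ip: "interval_partition L ws"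
  shows "parity_transition L (row_step L ws k) (row_stage ws k) (row_stage ws (Suc k))
    (\<lambda>y. card {t \<in> sites L. strip_offset ws (snd t) = Suc k \<and> t \<in> y \<and>
                            odd (card (row_inversions ws t \<inter> y))})"
proof -
  let ?T = "\<lambda>t. strip_offset ws (snd t) = Suc k \<and> odd (fst t)"
  have cz: "parity_transition L [row_cz_layer L ws k] (row_stage ws k) (row_stage ws k)
      (\<lambda>y. card {q \<in> sites L. ?T q \<and> odd (card (row_stage ws k (id q) \<inter> y)) \<and>
                              odd (card (row_stage ws k (west q) \<inter> y))})"
    unfolding row_cz_layer_def using west_in_strip(1)[OF ip] by (intro parity_transition_cz_layer) auto
  have "(?T q \<and> odd (card (row_stage ws k (id q) \<inter> y)) \<and> odd (card (row_stage ws k (west q) \<inter> y))) =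
      (strip_offset ws (snd q) = Suc k \<and> q \<in> y \<and> odd (card (row_inversions ws q \<inter> y)))"
    if q: "q \<in> sites L" for q y
  proof (cases "?T q")
    case True
    then show ?thesis
      using west_in_strip[OF ip q] row_inversions_eq_row_segment_west[OF ip q]
      by (cases "q \<in> y") (auto simp: row_stage_def)
  qed (auto simp: row_inversions_def)
  then have "card {q \<in> sites L. ?T q \<and> odd (card (row_stage ws k (id q) \<inter> y)) \<and>
                              odd (card (row_stage ws k (west q) \<inter> y))} =
      card {t \<in> sites L. strip_offset ws (snd t) = Suc k \<and> t \<in> y \<and>
                          odd (card (row_inversions ws t \<inter> y))}" for y
    by (rule card_Collect_mem_cong)
  then show ?thesis
    using parity_transition_append[OF cz parity_transition_row_cnot_layer(1)[OF ip]]
    unfolding row_step_def by simp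
qed

lemma parity_transition_rows:
  assumes ip: "interval_partition L ws"
  shows "parity_transition L (concat (map (row_step L ws) [0..<L - 1])) (\<lambda>q. {q}) (row_segment ws)
    (row_phase ws)"
proof -
  let ?n = "\<lambda>k y. card {t \<in> sites L. strip_offset ws (snd t) = k \<and> t \<in> y \<and>
                                     odd (card (row_inversions ws t \<inter> y))}"
  have "parity_transition L (concat (map (row_step L ws) [0..<L - 1])) (row_stage ws 0)
      (row_stage ws (L - 1)) (\<lambda>y. \<Sum>k = 0..<L - 1. ?n (Suc k) y)"
    using parity_transition_row_step[OF ip] by (intro parity_transition_upt) auto
  moreover have "\<forall>q\<in>sites L. row_stage ws 0 q = {q}"
    using row_segment_offset_0[OF ip] by (simp add: row_stage_def)
  moreover have "\<forall>q\<in>sites L. row_stage ws (L - 1) q = row_segment ws q"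
    using row_stage_last by blast
  moreover have "\<forall>y. y \<subseteq> sites L \<longrightarrow> (\<Sum>k = 0..<L - 1. ?n (Suc k) y) = row_phase ws y"
  proof (intro allI impI)
    fix y assume y: "y \<subseteq> sites L"
    have "{Suc 0..<Suc (L - 1)} = {1..<L}" by (cases L) auto
    then have "(\<Sum>k = 0..<L - 1. ?n (Suc k) y) = (\<Sum>k = 1..<L. ?n k y)"
      using sum.shift_bounds_Suc_ivl[of "\<lambda>k. ?n k y" 0 "L - 1"] by argo
    also have "\<dots> = card {t \<in> sites L. strip_offset ws (snd t) \<in> {1..<L} \<and> t \<in> y \<and>
                                       odd (card (row_inversions ws t \<inter> y))}"
      by (intro sum_card_fibres) auto
    also have "\<dots> = row_phase ws y"
      unfolding row_phase_def using y odd_card_row_inversions_offset by (intro arg_cong[where f = card]) auto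
    finally show "(\<Sum>k = 0..<L - 1. ?n (Suc k) y) = row_phase ws y" .
  qed
  ultimately show ?thesis by (rule parity_transition_cong)
qed

lemma parity_transition_rows_rev:
  assumes ip: "interval_partition L ws"
  shows "parity_transition L (concat (map (\<lambda>k. [row_cnot_layer L ws k]) (rev [0..<L - 1])))
    (row_segment ws) (\<lambda>q. {q}) (\<lambda>_. 0)"
proof -
  have "parity_transition L (concat (map (\<lambda>k. [row_cnot_layer L ws k]) (rev [0..<L - 1])))
      (row_stage ws (L - 1)) (row_stage ws 0) (\<lambda>y. \<Sum>k = 0..<L - 1. 0)"
    using parity_transition_row_cnot_layer(2)[OF ip] by (intro parity_transition_upt_rev) auto
  moreover have "\<forall>q\<in>sites L. row_stage ws (L - 1) q = row_segment ws q"
    using row_stage_last by blast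
  moreover have "\<forall>q\<in>sites L. row_stage ws 0 q = {q}"
    using row_segment_offset_0[OF ip] by (simp add: row_stage_def)
  ultimately show ?thesis by (rule parity_transition_cong) simp
qed

definition column_stage :: "nat \<Rightarrow> nat list \<Rightarrow> nat \<Rightarrow> site \<Rightarrow> site set" where
  "column_stage L ws k t = (if k \<le> fst t then block L ws t else row_segment ws t)"

definition column_layer :: "nat \<Rightarrow> nat \<Rightarrow> layer" where
  "column_layer L k = cnot_layer L (\<lambda>t. fst t = k) south"

lemma parity_transition_column_layer:
  assumes "Suc k < L"
  shows "parity_transition L [column_layer L k] (column_stage L ws (Suc k)) (column_stage L ws k) (\<lambda>_. 0)"
    "parity_transition L [column_layer L k] (column_stage L ws k) (column_stage L ws (Suc k)) (\<lambda>_. 0)"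
proof -
  have ctl: "\<forall>t\<in>sites L. fst t = k \<longrightarrow> south t \<in> sites L \<and> fst (south t) \<noteq> k"
    using assms by (auto simp: south_def mem_sites_iff)
  have "\<forall>q\<in>sites L. column_stage L ws k q = cnot_update (\<lambda>t. fst t = k) south (column_stage L ws (Suc k)) q"
  proof
    fix q assume q: "q \<in> sites L"
    show "column_stage L ws k q = cnot_update (\<lambda>t. fst t = k) south (column_stage L ws (Suc k)) q"
    proof (cases "fst q = k")
      case True
      then show ?thesis
        using block_sym_diff_south[of q L ws] q
        by (simp add: column_stage_def cnot_update_def south_def mem_sites_iff)
    qed (auto simp: column_stage_def cnot_update_def)
  qed
  from parity_transition_cnot_layer[OF ctl this]
  show "parity_transition L [column_layer L k] (column_stage L ws (Suc k)) (column_stage L ws k) (\<lambda>_. 0)"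
    "parity_transition L [column_layer L k] (column_stage L ws k) (column_stage L ws (Suc k)) (\<lambda>_. 0)"
    unfolding column_layer_def .
qed

lemma column_stage_last: "t \<in> sites L \<Longrightarrow> column_stage L ws (L - 1) t = row_segment ws t"
  by (cases t) (auto simp: column_stage_def block_def row_segment_def sites_def)

lemma parity_transition_columns_down:
  "parity_transition L (concat (map (\<lambda>k. [column_layer L k]) (rev [0..<L - 1])))
    (row_segment ws) (block L ws) (\<lambda>_. 0)"
proof -
  have "parity_transition L (concat (map (\<lambda>k. [column_layer L k]) (rev [0..<L - 1])))
      (column_stage L ws (L - 1)) (column_stage L ws 0) (\<lambda>y. \<Sum>k = 0..<L - 1. 0)"
    using parity_transition_column_layer(1) by (intro parity_transition_upt_rev) auto
  moreover have "\<forall>q\<in>sites L. column_stage L ws (L - 1) q = row_segment ws q"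
    using column_stage_last by blast
  moreover have "\<forall>q\<in>sites L. column_stage L ws 0 q = block L ws q"
    by (simp add: column_stage_def)
  ultimately show ?thesis by (rule parity_transition_cong) simp
qed

lemma parity_transition_columns_up:
  "parity_transition L (concat (map (\<lambda>k. [column_layer L k]) [0..<L - 1]))
    (block L ws) (row_segment ws) (\<lambda>_. 0)"
proof -
  have "parity_transition L (concat (map (\<lambda>k. [column_layer L k]) [0..<L - 1]))
      (column_stage L ws 0) (column_stage L ws (L - 1)) (\<lambda>y. \<Sum>k = 0..<L - 1. 0)"
    using parity_transition_column_layer(2) by (intro parity_transition_upt) auto
  moreover have "\<forall>q\<in>sites L. column_stage L ws 0 q = block L ws q"
    by (simp add: column_stage_def)
  moreover have "\<forall>q\<in>sites L. column_stage L ws (L - 1) q = row_segment ws q"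
    using column_stage_last by blast
  ultimately show ?thesis by (rule parity_transition_cong) simp
qed

definition block_target :: "nat \<Rightarrow> nat list \<Rightarrow> bool \<times> bool \<Rightarrow> site \<Rightarrow> bool" where
  "block_target L ws ab t \<longleftrightarrow>
     (even (fst t), even (snd t)) = ab \<and> Suc (fst t) < L \<and> 1 \<le> strip_offset ws (snd t)"

definition block_helper :: "nat \<Rightarrow> nat list \<Rightarrow> bool \<times> bool \<Rightarrow> site \<Rightarrow> bool" where
  "block_helper L ws ab t \<longleftrightarrow> 1 \<le> fst t \<and> block_target L ws ab (north t)"

text \<open>For each target \<open>q\<close>, the first three layers bring the parity of \<open>{q}\<close> to \<open>south q\<close> and
  leave that of \<open>block_inversions L ws q\<close> on \<open>south_west q\<close>; the last three undo them, so only
  the sign of the CZ gates remains. Splitting the targets by the parities of row and column keeps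
  the gadgets of one class on disjoint qubits.\<close>

definition block_gadget :: "nat \<Rightarrow> nat list \<Rightarrow> bool \<times> bool \<Rightarrow> layer list" where
  "block_gadget L ws ab =
     [cnot_layer L (block_target L ws ab) west, cnot_layer L (block_helper L ws ab) north,
      cnot_layer L (block_helper L ws ab) west, cz_layer L (block_target L ws ab) south south_west,
      cnot_layer L (block_helper L ws ab) west, cnot_layer L (block_helper L ws ab) north,
      cnot_layer L (block_target L ws ab) west]"

definition block_stage :: "nat \<Rightarrow> nat list \<Rightarrow> layer list" where
  "block_stage L ws = concat (map (block_gadget L ws) (List.product [True, False] [True, False]))"

lemma odd_card_block_inversions_bounds:
  assumes "q \<in> sites L" "odd (card (block_inversions L ws q \<inter> y))"
  shows "Suc (fst q) < L \<and> 1 \<le> strip_offset ws (snd q)"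
proof -
  obtain p where "p \<in> block_inversions L ws q"
    using assms(2) by (metis card.empty disjoint_iff even_zero)
  then show ?thesis
    using strip_offset_le[of ws "snd q"] by (auto simp: block_inversions_def strip_offset_def)
qed

lemma block_target_col: "block_target L ws ab t \<Longrightarrow> 1 \<le> snd t"
  using strip_offset_le[of ws "snd t"] by (simp add: block_target_def)

lemma block_helper_coords: "block_helper L ws ab t \<Longrightarrow> 1 \<le> fst t \<and> 1 \<le> snd t"
  using block_target_col[of L ws ab "north t"] by (simp add: block_helper_def north_def)

lemma block_target_parity:
  "block_target L ws ab t \<Longrightarrow> block_target L ws ab t' \<Longrightarrow> even (fst t) = even (fst t') \<and> even (snd t) = even (snd t')"
  by (auto simp: block_target_def)

lemma block_target_west: "block_target L ws ab t \<Longrightarrow> \<not> block_target L ws ab (west t)"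
  using block_target_col[of L ws ab t] block_target_parity[of L ws ab t "west t"]
  by (auto simp: west_def)

lemma block_helper_north: "block_helper L ws ab t \<Longrightarrow> \<not> block_helper L ws ab (north t)"
proof
  assume "block_helper L ws ab t" "block_helper L ws ab (north t)"
  then have "1 \<le> fst t - 1" "even (fst t - 1) = even (fst t - 1 - 1)"
    using block_target_parity[of L ws ab "north t" "north (north t)"]
    by (auto simp: block_helper_def north_def)
  then show False by presburger
qed

lemma block_helper_west: "block_helper L ws ab t \<Longrightarrow> \<not> block_helper L ws ab (west t)"
proof
  assume "block_helper L ws ab t" "block_helper L ws ab (west t)"
  then have "1 \<le> snd t" "even (snd t) = even (snd t - 1)"
    using block_helper_coords[of L ws ab t] block_target_parity[of L ws ab "north t" "north (west t)"]
    by (auto simp: block_helper_def north_def west_def)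
  then show False by presburger
qed

lemma block_gadget_parities:
  assumes ip: "interval_partition L ws" and q: "q \<in> sites L" and target: "block_target L ws ab q"
    and F3: "F3 = cnot_update (block_helper L ws ab) west (cnot_update (block_helper L ws ab) north
                    (cnot_update (block_target L ws ab) west (block L ws)))"
  shows "F3 (south q) = {q}" "F3 (south_west q) = block_inversions L ws q"
proof -
  have off: "1 \<le> strip_offset ws (snd q)" and row: "Suc (fst q) < L"
    using target by (auto simp: block_target_def)
  note w = west_in_strip[OF ip q off]
  have classes: "\<not> block_target L ws ab (south q)" "block_helper L ws ab (south q)"
    "\<not> block_target L ws ab (south_west q)" "\<not> block_helper L ws ab (south_west q)"
    using target w(2) by (auto simp: block_target_def block_helper_def south_def south_west_def north_def west_def)
  have moves: "north (south q) = q" "west (south q) = south_west q" "north (south_west q) = west q"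
    by (simp_all add: north_def south_def west_def south_west_def)
  have "strip_start ws (snd q) \<le> snd q"
    using strip_bounds(2)[OF ip] q by (simp add: mem_sites_iff)
  then have "sym_diff (sym_diff (block L ws (south q)) (sym_diff (block L ws q) (block L ws (west q))))
      (block L ws (south_west q)) = {q}"
    using w row by (cases q) (auto simp: block_def south_def west_def south_west_def)
  then show "F3 (south q) = {q}"
    using target classes moves by (simp add: F3 cnot_update_def)
  show "F3 (south_west q) = block_inversions L ws q"
    using classes w by (auto simp: F3 cnot_update_def block_def block_inversions_def south_west_def west_def)
qed

lemma parity_transition_block_gadget:
  assumes ip: "interval_partition L ws"
  shows "parity_transition L (block_gadget L ws ab) (block L ws) (block L ws)
    (\<lambda>y. card {q \<in> sites L. block_target L ws ab q \<and> q \<in> y \<and> odd (card (block_inversions L ws q \<inter> y))})"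
proof -
  let ?T = "block_target L ws ab" and ?H = "block_helper L ws ab"
  have c1: "\<forall>t\<in>sites L. ?T t \<longrightarrow> west t \<in> sites L \<and> \<not> ?T (west t)"
    using block_target_west by (auto simp: west_def mem_sites_iff)
  have c2: "\<forall>t\<in>sites L. ?H t \<longrightarrow> north t \<in> sites L \<and> \<not> ?H (north t)"
    using block_helper_north by (auto simp: north_def mem_sites_iff)
  have c3: "\<forall>t\<in>sites L. ?H t \<longrightarrow> west t \<in> sites L \<and> \<not> ?H (west t)"
    using block_helper_west by (auto simp: west_def mem_sites_iff)
  have cz: "\<forall>q\<in>sites L. ?T q \<longrightarrow> south q \<in> sites L \<and> south_west q \<in> sites L"
    by (auto simp: block_target_def south_def south_west_def mem_sites_iff)
  define F3 where "F3 = cnot_update ?H west (cnot_update ?H north (cnot_update ?T west (block L ws)))"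
  have "(?T q \<and> odd (card (F3 (south q) \<inter> y)) \<and> odd (card (F3 (south_west q) \<inter> y))) \<longleftrightarrow>
      (?T q \<and> q \<in> y \<and> odd (card (block_inversions L ws q \<inter> y)))" if "q \<in> sites L" for q y
    using block_gadget_parities[OF ip that _ F3_def] by (cases "q \<in> y") auto
  then have "card {q \<in> sites L. ?T q \<and> odd (card (F3 (south q) \<inter> y)) \<and>
                                 odd (card (F3 (south_west q) \<inter> y))} =
      card {q \<in> sites L. ?T q \<and> q \<in> y \<and> odd (card (block_inversions L ws q \<inter> y))}" for y
    by (rule card_Collect_mem_cong)
  then show ?thesis
    using parity_transition_conjugated_cz[OF c1 c2 c3 cz F3_def] unfolding block_gadget_def by simp
qed

lemma parity_transition_block_stage:
  assumes ip: "interval_partition L ws"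
  shows "parity_transition L (block_stage L ws) (block L ws) (block L ws) (block_phase L ws)"
proof -
  let ?P = "\<lambda>y q. Suc (fst q) < L \<and> 1 \<le> strip_offset ws (snd q) \<and> q \<in> y \<and>
                  odd (card (block_inversions L ws q \<inter> y))"
  let ?n = "\<lambda>ab y. card {q \<in> sites L. block_target L ws ab q \<and> q \<in> y \<and>
                                    odd (card (block_inversions L ws q \<inter> y))}"
  have "parity_transition L (block_stage L ws) (block L ws) (block L ws)
      (\<lambda>y. \<Sum>ab\<leftarrow>List.product [True, False] [True, False]. ?n ab y)"
    unfolding block_stage_def using parity_transition_block_gadget[OF ip]
    by (rule parity_transition_concat_stationary)
  moreover have "(\<Sum>ab\<leftarrow>List.product [True, False] [True, False]. ?n ab y) = block_phase L ws y"
    if y: "y \<subseteq> sites L" for y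
  proof -
    have "(\<Sum>ab\<leftarrow>List.product [True, False] [True, False]. ?n ab y) = (\<Sum>ab\<in>UNIV. ?n ab y)"
      by (simp add: sum_list_distinct_conv_sum_set UNIV_Times_UNIV[symmetric] UNIV_bool)
    also have "\<dots> = (\<Sum>ab\<in>UNIV. card {q \<in> sites L. (even (fst q), even (snd q)) = ab \<and> ?P y q})"
      by (intro sum.cong refl card_Collect_mem_cong) (auto simp: block_target_def)
    also have "\<dots> = card {q \<in> sites L. (even (fst q), even (snd q)) \<in> UNIV \<and> ?P y q}"
      by (rule sum_card_fibres) auto
    also have "\<dots> = block_phase L ws y"
      unfolding block_phase_def using y odd_card_block_inversions_bounds
      by (intro arg_cong[where f = card]) auto
    finally show ?thesis .
  qed
  ultimately show ?thesis by (auto intro: parity_transition_cong)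
qed

definition reorder_circuit :: "nat \<Rightarrow> nat list \<Rightarrow> layer list" where
  "reorder_circuit L ws =
     concat (map (row_step L ws) [0..<L - 1]) @
     concat (map (\<lambda>k. [column_layer L k]) (rev [0..<L - 1])) @
     block_stage L ws @
     concat (map (\<lambda>k. [column_layer L k]) [0..<L - 1]) @
     concat (map (\<lambda>k. [row_cnot_layer L ws k]) (rev [0..<L - 1]))"

lemma parity_transition_reorder_circuit:
  assumes ip: "interval_partition L ws"
  shows "parity_transition L (reorder_circuit L ws) (\<lambda>q. {q}) (\<lambda>q. {q})
    (\<lambda>y. row_phase ws y + block_phase L ws y)"
proof -
  from parity_transition_append[OF parity_transition_rows[OF ip]
      parity_transition_append[OF parity_transition_columns_down
      parity_transition_append[OF parity_transition_block_stage[OF ip]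
      parity_transition_append[OF parity_transition_columns_up parity_transition_rows_rev[OF ip]]]]]
  show ?thesis unfolding reorder_circuit_def by simp
qed

lemma adjacent_west: "1 \<le> snd t \<Longrightarrow> adjacent (west t) t"
  by (auto simp: adjacent_def west_def)

lemma inj_on_west: "inj_on west {t. 1 \<le> snd t}"
  by (auto simp: inj_on_def west_def prod_eq_iff)

lemma inj_on_north: "inj_on north {t. 1 \<le> fst t}"
  by (auto simp: inj_on_def north_def prod_eq_iff)

lemma valid_row_cnot_layer:
  assumes ip: "interval_partition L ws"
  shows "valid_layer L (row_cnot_layer L ws k)"
  unfolding row_cnot_layer_def
proof (rule valid_cnot_layer)
  show "\<forall>t\<in>sites L. strip_offset ws (snd t) = Suc k \<longrightarrow>
      west t \<in> sites L \<and> adjacent (west t) t \<and> strip_offset ws (snd (west t)) \<noteq> Suc k"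
    using west_in_strip[OF ip] adjacent_west by auto
  show "inj_on west {t \<in> sites L. strip_offset ws (snd t) = Suc k}"
    by (rule inj_on_subset[OF inj_on_west]) (use west_in_strip(2)[OF ip] in auto)
qed

lemma valid_row_cz_layer:
  assumes ip: "interval_partition L ws"
  shows "valid_layer L (row_cz_layer L ws k)"
  unfolding row_cz_layer_def
proof (rule valid_cz_layer)
  let ?T = "\<lambda>t. strip_offset ws (snd t) = Suc k \<and> odd (fst t)"
  show "\<forall>t\<in>sites L. ?T t \<longrightarrow> id t \<in> sites L \<and> west t \<in> sites L \<and> adjacent (id t) (west t)"
  proof (intro ballI impI)
    fix t assume "t \<in> sites L" "?T t"
    with west_in_strip[OF ip this(1)] show "id t \<in> sites L \<and> west t \<in> sites L \<and> adjacent (id t) (west t)"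
      by (auto simp: adjacent_def west_def)
  qed
  show "\<forall>t\<in>sites L. \<forall>t'\<in>sites L. ?T t \<longrightarrow> ?T t' \<longrightarrow> t \<noteq> t' \<longrightarrow> {id t, west t} \<inter> {id t', west t'} = {}"
  proof (intro ballI impI)
    fix t t' assume t: "t \<in> sites L" "t' \<in> sites L" "?T t" "?T t'" "t \<noteq> t'"
    have "west t \<noteq> t'" "west t' \<noteq> t"
      using west_in_strip(4)[OF ip t(1)] west_in_strip(4)[OF ip t(2)] t(3,4) by auto
    moreover have "1 \<le> snd t" "1 \<le> snd t'"
      using west_in_strip(2)[OF ip t(1)] west_in_strip(2)[OF ip t(2)] t(3,4) by auto
    then have "west t \<noteq> west t'"
      using inj_onD[OF inj_on_west, of t t'] t(5) by auto
    ultimately show "{id t, west t} \<inter> {id t', west t'} = {}" using t(5) by auto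
  qed
qed

lemma valid_column_layer:
  assumes "Suc k < L"
  shows "valid_layer L (column_layer L k)"
  unfolding column_layer_def
  by (rule valid_cnot_layer)
     (use assms in \<open>auto simp: south_def adjacent_def mem_sites_iff inj_on_def prod_eq_iff\<close>)

lemma valid_block_cz_layer: "valid_layer L (cz_layer L (block_target L ws ab) south south_west)"
proof (rule valid_cz_layer)
  let ?T = "block_target L ws ab"
  show "\<forall>t\<in>sites L. ?T t \<longrightarrow> south t \<in> sites L \<and> south_west t \<in> sites L \<and> adjacent (south t) (south_west t)"
  proof (intro ballI impI)
    fix t assume "t \<in> sites L" "?T t"
    with block_target_col[OF \<open>?T t\<close>]
    show "south t \<in> sites L \<and> south_west t \<in> sites L \<and> adjacent (south t) (south_west t)"
      by (auto simp: block_target_def south_def south_west_def adjacent_def mem_sites_iff)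
  qed
  show "\<forall>t\<in>sites L. \<forall>t'\<in>sites L. ?T t \<longrightarrow> ?T t' \<longrightarrow> t \<noteq> t' \<longrightarrow>
      {south t, south_west t} \<inter> {south t', south_west t'} = {}"
  proof (intro ballI impI)
    fix t t' assume "t \<in> sites L" "t' \<in> sites L" "?T t" "?T t'" "t \<noteq> t'"
    moreover have "snd t \<noteq> snd t' - 1" "snd t' \<noteq> snd t - 1"
      using block_target_parity[OF \<open>?T t\<close> \<open>?T t'\<close>] block_target_col[OF \<open>?T t\<close>]
        block_target_col[OF \<open>?T t'\<close>] by presburger+
    ultimately show "{south t, south_west t} \<inter> {south t', south_west t'} = {}"
      using block_target_col by (auto simp: south_def south_west_def prod_eq_iff)
  qed
qed

lemma valid_block_gadget: "\<forall>l\<in>set (block_gadget L ws ab). valid_layer L l"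
proof -
  let ?T = "block_target L ws ab" and ?H = "block_helper L ws ab"
  have "valid_layer L (cnot_layer L ?T west)"
  proof (rule valid_cnot_layer)
    show "\<forall>t\<in>sites L. ?T t \<longrightarrow> west t \<in> sites L \<and> adjacent (west t) t \<and> \<not> ?T (west t)"
      using block_target_col block_target_west adjacent_west by (auto simp: west_def mem_sites_iff)
    show "inj_on west {t \<in> sites L. ?T t}"
      by (rule inj_on_subset[OF inj_on_west]) (use block_target_col[of L ws ab] in blast)
  qed
  moreover have "valid_layer L (cnot_layer L ?H north)"
  proof (rule valid_cnot_layer)
    show "\<forall>t\<in>sites L. ?H t \<longrightarrow> north t \<in> sites L \<and> adjacent (north t) t \<and> \<not> ?H (north t)"
    proof (intro ballI impI)
      fix t assume "t \<in> sites L" "?H t"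
      with block_helper_coords[OF \<open>?H t\<close>] block_helper_north[OF \<open>?H t\<close>]
      show "north t \<in> sites L \<and> adjacent (north t) t \<and> \<not> ?H (north t)"
        by (auto simp: north_def adjacent_def mem_sites_iff)
    qed
    show "inj_on north {t \<in> sites L. ?H t}"
      by (rule inj_on_subset[OF inj_on_north]) (use block_helper_coords[of L ws ab] in blast)
  qed
  moreover have "valid_layer L (cnot_layer L ?H west)"
  proof (rule valid_cnot_layer)
    show "\<forall>t\<in>sites L. ?H t \<longrightarrow> west t \<in> sites L \<and> adjacent (west t) t \<and> \<not> ?H (west t)"
      using block_helper_coords block_helper_west adjacent_west by (auto simp: west_def mem_sites_iff)
    show "inj_on west {t \<in> sites L. ?H t}"
      by (rule inj_on_subset[OF inj_on_west]) (use block_helper_coords[of L ws ab] in blast)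
  qed
  ultimately show ?thesis using valid_block_cz_layer by (simp add: block_gadget_def)
qed

lemma valid_reorder_circuit:
  assumes ip: "interval_partition L ws"
  shows "valid_circuit L (reorder_circuit L ws)"
  using valid_row_cz_layer[OF ip] valid_row_cnot_layer[OF ip] valid_column_layer valid_block_gadget
  by (auto simp: valid_circuit_def reorder_circuit_def row_step_def block_stage_def)

lemma reorder_circuit_not_single_qubit_gate:
  "l \<in> set (reorder_circuit L ws) \<Longrightarrow> g \<in> set l \<Longrightarrow> \<not> single_qubit_gate g"
  using not_single_qubit_gate_cnot_layer not_single_qubit_gate_cz_layer
  by (fastforce simp: reorder_circuit_def row_step_def row_cz_layer_def row_cnot_layer_def column_layer_def
      block_stage_def block_gadget_def)

lemma depth_reorder_circuit: "depth (reorder_circuit L ws) = 5 * (L - 1) + 28"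
  by (simp add: depth_def reorder_circuit_def row_step_def block_stage_def block_gadget_def
      length_concat comp_def sum_list_triv)

lemma gate_count_append: "gate_count (cs @ ds) = gate_count cs + gate_count ds"
  by (simp add: gate_count_def)

lemma gate_count_concat_map:
  "distinct ks \<Longrightarrow> gate_count (concat (map f ks)) = (\<Sum>k\<in>set ks. gate_count (f k))"
  by (induction ks) (simp_all add: gate_count_def)

lemma gate_count_column_layers:
  assumes "distinct ks"
  shows "gate_count (concat (map (\<lambda>k. [column_layer L k]) ks)) \<le> L * L"
proof -
  have "gate_count (concat (map (\<lambda>k. [column_layer L k]) ks)) = (\<Sum>k\<in>set ks. card {t \<in> sites L. fst t = k})"
    using assms by (subst gate_count_concat_map) (simp_all add: gate_count_def column_layer_def length_cnot_layer)
  also have "\<dots> \<le> L * L"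
    using sum_card_disjoint_le[of "sites L" "set ks" "\<lambda>k. k" fst] by (simp add: card_sites)
  finally show ?thesis .
qed

lemma gate_count_block_stage: "gate_count (block_stage L ws) \<le> 28 * (L * L)"
proof -
  have "length l \<le> L * L" if "l \<in> set (block_stage L ws)" for l
    using that card_mono[OF finite_sites, of "{t \<in> sites L. _ t}"]
    by (auto simp: block_stage_def block_gadget_def length_cnot_layer length_cz_layer card_sites)
  then have "gate_count (block_stage L ws) \<le> (\<Sum>l\<leftarrow>block_stage L ws. L * L)"
    unfolding gate_count_def by (intro sum_list_mono)
  then show ?thesis by (simp add: sum_list_triv block_stage_def block_gadget_def)
qed

lemma gate_count_reorder_circuit: "gate_count (reorder_circuit L ws) \<le> 33 * (L * L)"
proof -
  let ?off = "\<lambda>k. card {t \<in> sites L. strip_offset ws (snd t) = Suc k}"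
  have offsets: "(\<Sum>k = 0..<L - 1. ?off k) \<le> L * L"
    using sum_card_disjoint_le[of "sites L" "{0..<L - 1}" Suc] by (simp add: card_sites)
  have "gate_count (concat (map (row_step L ws) [0..<L - 1])) \<le> (\<Sum>k = 0..<L - 1. 2 * ?off k)"
    unfolding gate_count_concat_map[OF distinct_upt] set_upt
    by (intro sum_mono) (auto simp: gate_count_def row_step_def row_cz_layer_def row_cnot_layer_def
        length_cz_layer length_cnot_layer intro: card_mono)
  moreover have "gate_count (concat (map (\<lambda>k. [row_cnot_layer L ws k]) (rev [0..<L - 1]))) =
      (\<Sum>k = 0..<L - 1. ?off k)"
    by (subst gate_count_concat_map) (simp_all add: gate_count_def row_cnot_layer_def length_cnot_layer)
  moreover have "gate_count (concat (map (\<lambda>k. [column_layer L k]) (rev [0..<L - 1]))) \<le> L * L"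
    "gate_count (concat (map (\<lambda>k. [column_layer L k]) [0..<L - 1])) \<le> L * L"
    by (simp_all only: gate_count_column_layers distinct_rev distinct_upt)
  ultimately show ?thesis
    using offsets gate_count_block_stage[of L ws]
    unfolding reorder_circuit_def gate_count_append sum_distrib_left[symmetric] by linarith
qed

lemma maps_encoding_reorder_circuits:
  assumes ip: "interval_partition L ws" and ip': "interval_partition L ws'"
  shows "maps_encoding L (circuit_op L (reorder_circuit L ws @ reorder_circuit L ws'))
    (boustro L ws) (boustro L ws')"
proof -
  let ?cs = "reorder_circuit L ws @ reorder_circuit L ws'"
  let ?n = "\<lambda>y. row_phase ws y + block_phase L ws y + (row_phase ws' y + block_phase L ws' y)"
  have tr: "parity_transition L ?cs (\<lambda>q. {q}) (\<lambda>q. {q}) ?n"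
    by (rule parity_transition_append[OF parity_transition_reorder_circuit[OF ip]
          parity_transition_reorder_circuit[OF ip']])
  have "monomial_op L (circuit_op L ?cs) (circuit_perm ?cs) (\<lambda>y. (-1) ^ circuit_sign_exp ?cs y)"
    using valid_reorder_circuit[OF ip] valid_reorder_circuit[OF ip'] reorder_circuit_not_single_qubit_gate
    by (intro monomial_op_circuit) (auto simp: valid_circuit_def valid_layer_def)
  then have W: "monomial_op L (circuit_op L ?cs) id (\<lambda>y. (-1) ^ ?n y)"
    by (rule monomial_op_cong) (use tr in \<open>auto simp: parity_transition_def parity_state_singletons\<close>)
  have n: "even (?n z + pair_count (strip_inversion ws) z + pair_count (strip_inversion ws') z)"
    if "z \<subseteq> sites L" for z
    using even_phases_add_pair_count[OF ip that] even_phases_add_pair_count[OF ip' that] by presburger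
  \<comment> \<open>\<open>c\<close> counts the column-major string, with which both encodings are compared\<close>
  have parity: "even (a' + a + d + e)"
    if "even (a' + p' + q')" "even (a + p + q)" "even (p' + p + d + c)" "even (q' + q + e + c)"
    for a a' p p' q q' c d e :: nat
    using that by presburger
  show ?thesis
  proof (rule maps_encoding_sign_op[OF W])
    fix j y assume j: "j \<in> sites L" and y: "y \<subseteq> sites L"
    show "even (?n (flip j y) + ?n y + card (preceding L (boustro L ws) j \<inter> y) +
        card (preceding L (boustro L ws') j \<inter> y))"
      by (rule parity[OF n[OF flip_subset_sites[OF j y]] n[OF y]
          pair_count_flip_preceding[OF strip_inversion_asym j y sym_diff_preceding_boustro[OF ip j]]
          pair_count_flip_preceding[OF strip_inversion_asym j y sym_diff_preceding_boustro[OF ip' j]]])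
  qed
qed

theorem mainTheorem5:
  shows "\<exists>c1 c2 :: nat. \<forall>L ws ws'.
           interval_partition L ws \<longrightarrow> interval_partition L ws' \<longrightarrow>
           (\<exists>cs. valid_circuit L cs \<and>
                 gate_count cs \<le> c1 * L ^ 2 \<and>
                 depth cs \<le> c2 * L \<and>
                 maps_encoding L (circuit_op L cs) (boustro L ws) (boustro L ws'))"
proof (rule exI[of _ 66], rule exI[of _ 56], intro allI impI)
  fix L ws ws' assume ip: "interval_partition L ws" and ip': "interval_partition L ws'"
  show "\<exists>cs. valid_circuit L cs \<and> gate_count cs \<le> 66 * L ^ 2 \<and> depth cs \<le> 56 * L \<and>
      maps_encoding L (circuit_op L cs) (boustro L ws) (boustro L ws')"
  proof (cases "L = 0")
    case True
    then show ?thesis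
      by (intro exI[of _ "[]"]) (simp add: valid_circuit_def gate_count_def depth_def maps_encoding_def sites_def)
  next
    case False
    let ?cs = "reorder_circuit L ws @ reorder_circuit L ws'"
    have "valid_circuit L ?cs"
      using valid_reorder_circuit[OF ip] valid_reorder_circuit[OF ip'] by (auto simp: valid_circuit_def)
    moreover have "gate_count ?cs \<le> 66 * L ^ 2"
      using gate_count_reorder_circuit[of L ws] gate_count_reorder_circuit[of L ws']
      by (simp add: gate_count_append power2_eq_square)
    moreover have "depth ?cs \<le> 56 * L"
      using False depth_reorder_circuit[of L ws] depth_reorder_circuit[of L ws'] by (simp add: depth_def)
    ultimately show ?thesis using maps_encoding_reorder_circuits[OF ip ip'] by blast
  qed
qed

end
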